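(* Consider $\Gamma_T(p,q)$, let $\sigma^*_{p,q}$, $\tau^*_{p,q}$ be security strategies of players 1 and 2, and $x^*_{p,q}$, $y^*_{p,q}$ their realization plans. Then $\mu^*\in\mathbb R^{|K|}$ with $\mu^{*k}=-w_{k,0}(y^*_{p,q})$ for all $k\in K$ is an optimal solution of $\min_{\mu\in\mathbb R^{|K|}}\{\tilde V^1_T(\mu,q)-p^T\mu\}$, and $\nu^*\in\mathbb R^{|L|}$ with $\nu^{*l}=-u_{l,0}(x^*_{p,q})$ for all $l\in L$ is an optimal solution of $\max_{\nu\in\mathbb R^{|L|}}\{\tilde V^2_T(p,\nu)-q^T\nu\}$.
   Context: Setting: nonempty finite type sets $K,L$, action sets $A,B$, payoff $M:K\times L\times A\times B\to\mathbb R$, $p\in\Delta(K),q\in\Delta(L)$ with positive entries. In $\Gamma_T(p,q)$, $k\sim p$, $l\sim q$ are drawn independently and told privately to players 1 and 2; for $T$ stages both choose actions simultaneously, publicly announced; behavior strategies depend on own type and both action histories; payoff $\gamma_T=\mathbb E[\sum_{t=1}^TM(k,l,a_t,b_t)]$ to player 1 (maximizer); value $V_T(p,q)$; security strategies attain $\max_\sigma\min_\tau\gamma_T$ (player 1) resp. $\min_\tau\max_\sigma\gamma_T$ (player 2). The realization plan of $\sigma$ is $x^{a_t}_{k,h^A_t,h^B_t}=p^k\prod_{s=1}^t\sigma^{a_s}_s(k,h^A_s,h^B_s)$ (similarly for $\tau$ with $q$). For $x$ the realization plan of $\sigma$: $u_{l,0}(x)=\min_{\tau(l)}\sum_kp^k\mathbb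 E_{\sigma,\tau(l)}[\sum_{s=1}^TM(k,l,a_s,b_s)\mid k,l]$ (minimum over strategies of player 2 of type $l$); for $y$ the realization plan of $\tau$: $w_{k,0}(y)=\max_{\sigma(k)}\sum_lq^l\mathbb E_{\sigma(k),\tau}[\sum_{s=1}^TM\mid k,l]$. Dual games: in $\tilde\Gamma^1_T(\mu,q)$ ($\mu\in\mathbb R^{|K|}$) player 1 chooses his own type $k$ (by a distribution of his choice, hidden from player 2), nature draws $l\sim q$ and tells player 2, $T$ stages are played, payoff to player 1 $\mathbb E[\mu^k+\sum_{t=1}^TM(k,l,a_t,b_t)]$, value $\tilde V^1_T(\mu,q)$. In $\tilde\Gamma^2_T(p,\nu)$ ($\nu\in\mathbb R^{|L|}$) nature draws $k\sim p$ and tells player 1, player 2 chooses $l$ himself, payoff $\mathbb E[\nu^l+\sum_{t=1}^TM]$, value $\tilde V^2_T(p,\nu)$. *)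

theory Defs
  imports Complex_Main
begin

definition distr :: "('x::finite \<Rightarrow> real) \<Rightarrow> bool" where
  "distr d \<longleftrightarrow> (\<forall>x. 0 \<le> d x) \<and> sum d UNIV = 1"

text \<open>A strategy of player 1 maps his type k and the
  action histories (of player 1 and player 2, listed in stage order) to a
  mixed action on A; the current stage is the history length plus one.\<close>
definition strat1 :: "('k \<Rightarrow> 'a list \<Rightarrow> 'b list \<Rightarrow> 'a::finite \<Rightarrow> real) set" where
  "strat1 = {\<sigma>. \<forall>k ha hb. distr (\<sigma> k ha hb)}"

definition strat2 :: "('l \<Rightarrow> 'a list \<Rightarrow> 'b list \<Rightarrow> 'b::finite \<Rightarrow> real) set" where
  "strat2 = {\<tau>. \<forall>l ha hb. distr (\<tau> l ha hb)}"

fun payoff_from :: "nat \<Rightarrow> ('k \<Rightarrow> 'l \<Rightarrow> 'a::finite \<Rightarrow> 'b::finite \<Rightarrow> real)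
    \<Rightarrow> ('k \<Rightarrow> 'a list \<Rightarrow> 'b list \<Rightarrow> 'a \<Rightarrow> real)
    \<Rightarrow> ('l \<Rightarrow> 'a list \<Rightarrow> 'b list \<Rightarrow> 'b \<Rightarrow> real)
    \<Rightarrow> 'k \<Rightarrow> 'l \<Rightarrow> 'a list \<Rightarrow> 'b list \<Rightarrow> real" where
  "payoff_from 0 M \<sigma> \<tau> k l ha hb = 0"
| "payoff_from (Suc n) M \<sigma> \<tau> k l ha hb =
     (\<Sum>a\<in>UNIV. \<Sum>b\<in>UNIV. \<sigma> k ha hb a * \<tau> l ha hb b *
        (M k l a b + payoff_from n M \<sigma> \<tau> k l (ha @ [a]) (hb @ [b])))"

text \<open>E_{sigma,tau}[sum_{t=1}^T M(k,l,a_t,b_t) | k, l].\<close>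
definition cond_payoff where
  "cond_payoff T M \<sigma> \<tau> k l = payoff_from T M \<sigma> \<tau> k l [] []"

definition gamma :: "nat \<Rightarrow> ('k::finite \<Rightarrow> 'l::finite \<Rightarrow> 'a::finite \<Rightarrow> 'b::finite \<Rightarrow> real)
    \<Rightarrow> ('k \<Rightarrow> real) \<Rightarrow> ('l \<Rightarrow> real)
    \<Rightarrow> ('k \<Rightarrow> 'a list \<Rightarrow> 'b list \<Rightarrow> 'a \<Rightarrow> real)
    \<Rightarrow> ('l \<Rightarrow> 'a list \<Rightarrow> 'b list \<Rightarrow> 'b \<Rightarrow> real) \<Rightarrow> real" where
  "gamma T M p q \<sigma> \<tau> = (\<Sum>k\<in>UNIV. \<Sum>l\<in>UNIV. p k * q l * cond_payoff T M \<sigma> \<tau> k l)"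

definition security1 where
  "security1 T M p q \<sigma> \<longleftrightarrow> \<sigma> \<in> strat1 \<and>
     (\<forall>\<sigma>'\<in>strat1. (INF \<tau>\<in>strat2. gamma T M p q \<sigma>' \<tau>) \<le> (INF \<tau>\<in>strat2. gamma T M p q \<sigma> \<tau>))"

definition security2 where
  "security2 T M p q \<tau> \<longleftrightarrow> \<tau> \<in> strat2 \<and>
     (\<forall>\<tau>'\<in>strat2. (SUP \<sigma>\<in>strat1. gamma T M p q \<sigma> \<tau>) \<le> (SUP \<sigma>\<in>strat1. gamma T M p q \<sigma> \<tau>'))"

text \<open>Realization plan of sigma (x^{a_t}_{k,h^A_t,h^B_t}); ha, hb are the histories
  before stage t, a the stage-t action.\<close>
definition realization_plan1 where
  "realization_plan1 p \<sigma> k ha hb a =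
     p k * (\<Prod>s<length ha. \<sigma> k (take s ha) (take s hb) (ha ! s)) * \<sigma> k ha hb a"

definition realization_plan2 where
  "realization_plan2 q \<tau> l ha hb b =
     q l * (\<Prod>s<length hb. \<tau> l (take s ha) (take s hb) (hb ! s)) * \<tau> l ha hb b"

text \<open>u_{l,0}(x) and w_{k,0}(y), written in terms of the strategy whose
  realization plan is x resp. y (they depend on the strategy only through it).\<close>
definition u0 where
  "u0 T M p \<sigma> l = (INF \<tau>\<in>strat2. \<Sum>k\<in>UNIV. p k * cond_payoff T M \<sigma> \<tau> k l)"

definition w0 where
  "w0 T M q \<tau> k = (SUP \<sigma>\<in>strat1. \<Sum>l\<in>UNIV. q l * cond_payoff T M \<sigma> \<tau> k l)"

text \<open>Dual games. Value taken as max-min (lower value); equal to min-max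
  by the minimax theorem for these finite games.\<close>
definition dual1_value where
  "dual1_value T M \<mu> q =
    (SUP (\<pi>, \<sigma>)\<in>{\<pi>. distr \<pi>} \<times> strat1. INF \<tau>\<in>strat2.
       \<Sum>k\<in>UNIV. \<pi> k * (\<mu> k + (\<Sum>l\<in>UNIV. q l * cond_payoff T M \<sigma> \<tau> k l)))"

definition dual2_value where
  "dual2_value T M p \<nu> =
    (SUP \<sigma>\<in>strat1. INF (\<rho>, \<tau>)\<in>{\<rho>. distr \<rho>} \<times> strat2.
       \<Sum>l\<in>UNIV. \<rho> l * (\<nu> l + (\<Sum>k\<in>UNIV. p k * cond_payoff T M \<sigma> \<tau> k l)))"

end

theory Submission
  imports Defs
begin

text \<open>
  The heart of the matter is the minimax inequality: player 2 has a strategy against which every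
  strategy of player 1 earns at most the security level of player 1. Player 1's payoff is
  convex-like in his behaviour strategy (Kuhn: a convex combination of realization plans is again a
  realization plan), and against a fixed strategy of player 1 player 2 always has a best reply
  among finitely many pure strategies, because the payoff is affine in the mixed action at each
  single node. A theorem of the alternative for convex-like families then yields a mixture of pure
  strategies of player 2, itself a behaviour strategy, that holds every strategy of player 1 to his
  security level.

  In the first dual game, if player 2 plays his security strategy, the bonus \<open>\<mu>* = - w0\<close> makes
  every type of player 1 earn at most 0; letting each type best-respond to it bounds \<open>p \<bullet> w0\<close> by
  the value player 1 can force against that strategy; and player 1 choosing his type by \<open>p\<close> and
  playing his security strategy shows that \<open>\<mu>\<close> costs at least the security level. The minimax
  inequality closes the chain. The argument for \<open>\<nu>* = - u0\<close> in the second dual game is symmetric.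
\<close>

lemma distrD: "distr d \<Longrightarrow> 0 \<le> d x" "distr d \<Longrightarrow> sum d UNIV = 1"
  by (auto simp: distr_def)

definition point_distr :: "'b \<Rightarrow> 'b \<Rightarrow> real" where
  "point_distr b b' = of_bool (b' = b)"

lemma distr_point_distr: "distr (point_distr (b::'b::finite))"
  unfolding distr_def point_distr_def by simp

lemma sum_point_distr_mult: "(\<Sum>b'\<in>UNIV. point_distr (b::'b::finite) b' * f b') = (f b :: real)"
  by (simp add: point_distr_def)

lemma sum_distr_le:
  fixes f g :: "'x::finite \<Rightarrow> real"
  assumes "distr \<pi>" "\<And>x. f x \<le> g x"
  shows "(\<Sum>x\<in>UNIV. \<pi> x * f x) \<le> (\<Sum>x\<in>UNIV. \<pi> x * g x)"
  using assms by (intro sum_mono mult_left_mono) (auto simp: distrD)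

lemma sum_distr_const: "distr \<pi> \<Longrightarrow> (\<Sum>x\<in>UNIV. \<pi> x * c) = c"
  by (simp add: sum_distrib_right[symmetric] distrD)

lemma abs_sum_distr_le:
  assumes "distr \<pi>" "\<And>x. \<bar>f x\<bar> \<le> R"
  shows "\<bar>\<Sum>x\<in>UNIV. \<pi> x * f x\<bar> \<le> (R::real)"
proof -
  have "\<bar>\<Sum>x\<in>UNIV. \<pi> x * f x\<bar> \<le> (\<Sum>x\<in>UNIV. \<pi> x * R)"
    by (rule order_trans[OF sum_abs sum_mono])
       (use assms in \<open>auto simp: abs_mult distrD intro: mult_left_mono\<close>)
  then show ?thesis using assms(1) by (simp add: sum_distr_const)
qed

lemma exists_le_sum_distr:
  fixes f :: "'b::finite \<Rightarrow> real"
  assumes "distr \<pi>"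
  shows "\<exists>b. f b \<le> (\<Sum>b\<in>UNIV. \<pi> b * f b)"
proof -
  obtain b where "f b = Min (range f)" using Min_in[of "range f"] by fastforce
  then have "f b \<le> f b'" for b' by simp
  then have "(\<Sum>b'\<in>UNIV. \<pi> b' * f b) \<le> (\<Sum>b'\<in>UNIV. \<pi> b' * f b')"
    by (rule sum_distr_le[OF assms, of "\<lambda>_. f b" f])
  then show ?thesis using assms by (auto simp: sum_distr_const)
qed

lemma strat1D: "\<sigma> \<in> strat1 \<Longrightarrow> distr (\<sigma> k ha hb)"
  by (simp add: strat1_def)

lemma strat2D: "\<tau> \<in> strat2 \<Longrightarrow> distr (\<tau> l ha hb)"
  by (simp add: strat2_def)

lemma strat1_nonempty: "strat1 \<noteq> {}"
proof -
  have "(\<lambda>_ _ _. point_distr undefined) \<in> strat1"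
    unfolding strat1_def by (simp add: distr_point_distr)
  then show ?thesis by blast
qed

lemma strat2_nonempty: "strat2 \<noteq> {}"
proof -
  have "(\<lambda>_ _ _. point_distr undefined) \<in> strat2"
    unfolding strat2_def by (simp add: distr_point_distr)
  then show ?thesis by blast
qed

lemma distr_nonempty: "{\<pi>::'k::finite \<Rightarrow> real. distr \<pi>} \<noteq> {}"
  using distr_point_distr by blast

lemma bdd_above_if_abs_le:
  assumes "\<And>x. x \<in> A \<Longrightarrow> \<bar>f x\<bar> \<le> (R::real)"
  shows "bdd_above (f ` A)"
proof (rule bdd_aboveI2)
  show "f x \<le> R" if "x \<in> A" for x using assms[OF that] by linarith
qed

lemma bdd_below_if_abs_le:
  assumes "\<And>x. x \<in> A \<Longrightarrow> \<bar>f x\<bar> \<le> (R::real)"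
  shows "bdd_below (f ` A)"
proof (rule bdd_belowI2)
  show "- R \<le> f x" if "x \<in> A" for x using assms[OF that] by linarith
qed

lemma abs_INF_le:
  assumes "A \<noteq> {}" and bound: "\<And>x. x \<in> A \<Longrightarrow> \<bar>f x\<bar> \<le> (R::real)"
  shows "\<bar>INF x\<in>A. f x\<bar> \<le> R"
proof -
  obtain x where "x \<in> A" using assms(1) by blast
  have "(INF x\<in>A. f x) \<le> f x" by (rule cINF_lower[OF bdd_below_if_abs_le[OF bound] \<open>x \<in> A\<close>])
  then have "(INF x\<in>A. f x) \<le> R" using bound[OF \<open>x \<in> A\<close>] by linarith
  moreover have "- R \<le> (INF x\<in>A. f x)"
  proof (rule cINF_greatest[OF assms(1)])
    show "- R \<le> f x" if "x \<in> A" for x using bound[OF that] by linarith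
  qed
  ultimately show ?thesis by linarith
qed

lemma abs_SUP_le:
  assumes "A \<noteq> {}" and bound: "\<And>x. x \<in> A \<Longrightarrow> \<bar>f x\<bar> \<le> (R::real)"
  shows "\<bar>SUP x\<in>A. f x\<bar> \<le> R"
proof -
  obtain x where "x \<in> A" using assms(1) by blast
  have "f x \<le> (SUP x\<in>A. f x)" by (rule cSUP_upper[OF \<open>x \<in> A\<close> bdd_above_if_abs_le[OF bound]])
  then have "- R \<le> (SUP x\<in>A. f x)" using bound[OF \<open>x \<in> A\<close>] by linarith
  moreover have "(SUP x\<in>A. f x) \<le> R"
  proof (rule cSUP_least[OF assms(1)])
    show "f x \<le> R" if "x \<in> A" for x using bound[OF that] by linarith
  qed
  ultimately show ?thesis by linarith
qed

lemma gamma_eq_sum_type1: "gamma T M p q \<sigma> \<tau> = (\<Sum>k\<in>UNIV. p k * (\<Sum>l\<in>UNIV. q l * cond_payoff T M \<sigma> \<tau> k l))"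
  unfolding gamma_def by (simp add: sum_distrib_left mult.assoc)

lemma gamma_eq_sum_type2: "gamma T M p q \<sigma> \<tau> = (\<Sum>l\<in>UNIV. q l * (\<Sum>k\<in>UNIV. p k * cond_payoff T M \<sigma> \<tau> k l))"
proof -
  have "gamma T M p q \<sigma> \<tau> = (\<Sum>l\<in>UNIV. \<Sum>k\<in>UNIV. p k * q l * cond_payoff T M \<sigma> \<tau> k l)"
    unfolding gamma_def by (rule sum.swap)
  then show ?thesis by (simp add: sum_distrib_left mult_ac)
qed

lemma payoff_from_cong_type1: "\<sigma> k = \<sigma>' k \<Longrightarrow> payoff_from n M \<sigma> \<tau> k l ha hb = payoff_from n M \<sigma>' \<tau> k l ha hb"
  by (induction n arbitrary: ha hb) simp_all

lemma payoff_from_cong_type2: "\<tau> l = \<tau>' l \<Longrightarrow> payoff_from n M \<sigma> \<tau> k l ha hb = payoff_from n M \<sigma> \<tau>' k l ha hb"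
  by (induction n arbitrary: ha hb) simp_all

lemma payoff_from_cong_long:
  assumes "\<And>l' ha' hb'. m \<le> length ha' \<Longrightarrow> \<tau> l' ha' hb' = \<tau>' l' ha' hb'" "m \<le> length ha"
  shows "payoff_from n M \<sigma> \<tau> k l ha hb = payoff_from n M \<sigma> \<tau>' k l ha hb"
  using assms(2) by (induction n arbitrary: ha hb) (simp_all add: assms(1))

lemma payoff_from_cong_short:
  assumes "\<And>l' ha' hb'. length ha' < m \<Longrightarrow> length hb' < m \<Longrightarrow> \<tau> l' ha' hb' = \<tau>' l' ha' hb'"
    and "length ha + n \<le> m" "length hb + n \<le> m"
  shows "payoff_from n M \<sigma> \<tau> k l ha hb = payoff_from n M \<sigma> \<tau>' k l ha hb"
  using assms(2,3) by (induction n arbitrary: ha hb) (simp_all add: assms(1))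

lemma payoff_from_abs_le:
  assumes "\<sigma> \<in> strat1" "\<tau> \<in> strat2" "\<And>k l a b. \<bar>M k l a b\<bar> \<le> B"
  shows "\<bar>payoff_from n M \<sigma> \<tau> k l ha hb\<bar> \<le> real n * B"
proof (induction n arbitrary: ha hb)
  case (Suc n)
  let ?X = "\<lambda>a b. M k l a b + payoff_from n M \<sigma> \<tau> k l (ha @ [a]) (hb @ [b])"
  have "\<bar>?X a b\<bar> \<le> real (Suc n) * B" for a b
    using assms(3)[of k l a b] Suc.IH[of "ha @ [a]" "hb @ [b]"] by (simp add: algebra_simps)
  then have "\<bar>\<Sum>b\<in>UNIV. \<tau> l ha hb b * ?X a b\<bar> \<le> real (Suc n) * B" for a
    by (rule abs_sum_distr_le[OF strat2D[OF assms(2)]])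
  then have "\<bar>\<Sum>a\<in>UNIV. \<sigma> k ha hb a * (\<Sum>b\<in>UNIV. \<tau> l ha hb b * ?X a b)\<bar> \<le> real (Suc n) * B"
    by (rule abs_sum_distr_le[OF strat1D[OF assms(1)]])
  then show ?case by (simp add: sum_distrib_left mult.assoc)
qed simp

lemma cond_payoff_bounded:
  fixes M :: "'k::finite \<Rightarrow> 'l::finite \<Rightarrow> 'a::finite \<Rightarrow> 'b::finite \<Rightarrow> real"
  shows "\<exists>C. \<forall>\<sigma>\<in>strat1. \<forall>\<tau>\<in>strat2. \<forall>k l. \<bar>cond_payoff T M \<sigma> \<tau> k l\<bar> \<le> C"
proof -
  define B where "B = (\<Sum>x\<in>UNIV. \<bar>case x of (k, l, a, b) \<Rightarrow> M k l a b\<bar>)"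
  have "\<bar>M k l a b\<bar> \<le> B" for k l a b
    using member_le_sum[of "(k, l, a, b)" UNIV "\<lambda>x. \<bar>case x of (k, l, a, b) \<Rightarrow> M k l a b\<bar>"]
    unfolding B_def by simp
  then have "\<bar>cond_payoff T M \<sigma> \<tau> k l\<bar> \<le> real T * B" if "\<sigma> \<in> strat1" "\<tau> \<in> strat2" for \<sigma> \<tau> k l
    unfolding cond_payoff_def using that by (intro payoff_from_abs_le)
  then show ?thesis by blast
qed

text \<open>Exchanging the two histories turns a strategy of player 2 into one of player 1 in the
  game with transposed payoff, so results about player 1 transfer to player 2.\<close>

definition flip_hist :: "('t \<Rightarrow> 'x list \<Rightarrow> 'y list \<Rightarrow> 'c \<Rightarrow> real) \<Rightarrow> 't \<Rightarrow> 'y list \<Rightarrow> 'x list \<Rightarrow> 'c \<Rightarrow> real" where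
  "flip_hist f t hy hx = f t hx hy"

lemma flip_hist_flip_hist [simp]: "flip_hist (flip_hist f) = f"
  by (simp add: flip_hist_def fun_eq_iff)

lemma flip_hist_strat2: "flip_hist \<tau> \<in> strat1 \<longleftrightarrow> \<tau> \<in> strat2"
  by (auto simp: strat1_def strat2_def flip_hist_def)

lemma payoff_from_flip_hist:
  "payoff_from n M \<sigma> \<tau> k l ha hb
   = payoff_from n (\<lambda>l k b a. M k l a b) (flip_hist \<tau>) (flip_hist \<sigma>) l k hb ha"
proof (induction n arbitrary: ha hb)
  case (Suc n)
  show ?case
    by (simp add: Suc.IH flip_hist_def, subst sum.swap) (simp add: mult.commute)
qed simp

lemma gamma_flip_hist:
  "gamma T M p q \<sigma> \<tau> = gamma T (\<lambda>l k b a. M k l a b) q p (flip_hist \<tau>) (flip_hist \<sigma>)"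
  unfolding gamma_def cond_payoff_def payoff_from_flip_hist[of T M \<sigma> \<tau>]
  by (subst sum.swap) (simp add: mult.commute)

section \<open>Mixing behaviour strategies\<close>

text \<open>The probability that type \<open>k\<close> plays \<open>ha\<close> along \<open>hb\<close>; in the notation of the paper
  \<open>realization_plan1 p \<sigma> k ha hb a = p k * reach1 \<sigma> k ha hb * \<sigma> k ha hb a\<close>.\<close>

definition reach1 :: "('k \<Rightarrow> 'a list \<Rightarrow> 'b list \<Rightarrow> 'a \<Rightarrow> real) \<Rightarrow> 'k \<Rightarrow> 'a list \<Rightarrow> 'b list \<Rightarrow> real" where
  "reach1 \<sigma> k ha hb = (\<Prod>s<length ha. \<sigma> k (take s ha) (take s hb) (ha ! s))"

lemma reach1_Nil [simp]: "reach1 \<sigma> k [] hb = 1"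
  by (simp add: reach1_def)

lemma reach1_snoc:
  "length ha = length hb \<Longrightarrow> reach1 \<sigma> k (ha @ [a]) (hb @ [b]) = reach1 \<sigma> k ha hb * \<sigma> k ha hb a"
  by (simp add: reach1_def prod.lessThan_Suc nth_append)

lemma reach1_nonneg: "\<sigma> \<in> strat1 \<Longrightarrow> 0 \<le> reach1 \<sigma> k ha hb"
  unfolding reach1_def by (intro prod_nonneg) (auto dest: strat1D distrD)

text \<open>Kuhn's construction: \<open>mix_strat1 c \<sigma> \<sigma>'\<close> is the behaviour strategy whose realization plan
  is the \<open>c\<close>-mixture of those of \<open>\<sigma>\<close> and \<open>\<sigma>'\<close>. At histories reached by neither it follows \<open>\<sigma>\<close>.\<close>

definition cond_mix :: "real \<Rightarrow> real \<Rightarrow> real \<Rightarrow> real \<Rightarrow> real \<Rightarrow> real" where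
  "cond_mix c X X' t t' =
     (let D = c * X + (1 - c) * X' in if D = 0 then t else (c * X * t + (1 - c) * X' * t') / D)"

lemma cond_mix_weight:
  assumes "0 \<le> c" "c \<le> 1" "0 \<le> X" "0 \<le> X'"
  shows "(c * X + (1 - c) * X') * cond_mix c X X' t t' = c * X * t + (1 - c) * X' * t'"
proof (cases "c * X + (1 - c) * X' = 0")
  case True
  then have "c * X = 0" "(1 - c) * X' = 0"
    using assms by (simp_all add: add_nonneg_eq_0_iff)
  then show ?thesis using True by (auto simp: cond_mix_def)
qed (simp add: cond_mix_def)

definition mix_strat1 ::
    "real \<Rightarrow> ('k \<Rightarrow> 'a list \<Rightarrow> 'b list \<Rightarrow> 'a \<Rightarrow> real) \<Rightarrow> ('k \<Rightarrow> 'a list \<Rightarrow> 'b list \<Rightarrow> 'a \<Rightarrow> real)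
      \<Rightarrow> 'k \<Rightarrow> 'a list \<Rightarrow> 'b list \<Rightarrow> 'a \<Rightarrow> real" where
  "mix_strat1 c \<sigma> \<sigma>' k ha hb =
     (\<lambda>a. cond_mix c (reach1 \<sigma> k ha hb) (reach1 \<sigma>' k ha hb) (\<sigma> k ha hb a) (\<sigma>' k ha hb a))"

lemma mix_strat1_strat1:
  fixes \<sigma> \<sigma>' :: "'k::finite \<Rightarrow> 'a::finite list \<Rightarrow> 'b::finite list \<Rightarrow> 'a \<Rightarrow> real"
  assumes strats: "\<sigma> \<in> strat1" "\<sigma>' \<in> strat1" and c: "0 \<le> c" "c \<le> 1"
  shows "mix_strat1 c \<sigma> \<sigma>' \<in> strat1"
  unfolding strat1_def
proof (intro CollectI allI)
  fix k ha hb
  define X X' where "X = reach1 \<sigma> k ha hb" and "X' = reach1 \<sigma>' k ha hb"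
  have X: "0 \<le> X" "0 \<le> X'"
    unfolding X_def X'_def using strats by (simp_all add: reach1_nonneg)
  have ds: "distr (\<sigma> k ha hb)" "distr (\<sigma>' k ha hb)"
    using strats by (simp_all add: strat1D)
  show "distr (mix_strat1 c \<sigma> \<sigma>' k ha hb)"
  proof (cases "c * X + (1 - c) * X' = 0")
    case True
    then show ?thesis using ds by (simp add: mix_strat1_def cond_mix_def X_def X'_def)
  next
    case False
    have "0 \<le> c * X + (1 - c) * X'" using X c by simp
    with False have pos: "0 < c * X + (1 - c) * X'" by simp
    have eq: "mix_strat1 c \<sigma> \<sigma>' k ha hb
        = (\<lambda>a. (c * X * \<sigma> k ha hb a + (1 - c) * X' * \<sigma>' k ha hb a) / (c * X + (1 - c) * X'))"
      using False by (simp add: mix_strat1_def cond_mix_def X_def X'_def)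
    have "(\<Sum>a\<in>UNIV. c * X * \<sigma> k ha hb a + (1 - c) * X' * \<sigma>' k ha hb a) = c * X + (1 - c) * X'"
      using ds by (simp add: sum.distrib sum_distrib_left[symmetric] distrD)
    moreover have "0 \<le> c * X * \<sigma> k ha hb a + (1 - c) * X' * \<sigma>' k ha hb a" for a
      using X c ds by (simp add: distrD)
    ultimately show ?thesis
      unfolding eq distr_def using pos by (simp add: sum_divide_distrib[symmetric])
  qed
qed

lemma reach1_mix_strat1:
  fixes \<sigma> \<sigma>' :: "'k::finite \<Rightarrow> 'a::finite list \<Rightarrow> 'b::finite list \<Rightarrow> 'a \<Rightarrow> real"
  assumes strats: "\<sigma> \<in> strat1" "\<sigma>' \<in> strat1" and c: "0 \<le> c" "c \<le> 1"
  shows "length ha = length hb \<Longrightarrow>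
     reach1 (mix_strat1 c \<sigma> \<sigma>') k ha hb = c * reach1 \<sigma> k ha hb + (1 - c) * reach1 \<sigma>' k ha hb"
proof (induction ha arbitrary: hb rule: rev_induct)
  case (snoc a ha)
  then obtain hb' b where hb: "hb = hb' @ [b]" and len: "length ha = length hb'"
    by (cases hb rule: rev_cases) auto
  show ?case
    unfolding hb reach1_snoc[OF len] snoc.IH[OF len]
    by (simp add: mix_strat1_def cond_mix_weight c strats reach1_nonneg)
qed simp

lemma payoff_from_mix_strat1:
  fixes \<sigma> \<sigma>' :: "'k::finite \<Rightarrow> 'a::finite list \<Rightarrow> 'b::finite list \<Rightarrow> 'a \<Rightarrow> real"
  assumes strats: "\<sigma> \<in> strat1" "\<sigma>' \<in> strat1" and c: "0 \<le> c" "c \<le> 1"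
  shows "length ha = length hb \<Longrightarrow>
     reach1 (mix_strat1 c \<sigma> \<sigma>') k ha hb * payoff_from n M (mix_strat1 c \<sigma> \<sigma>') \<tau> k l ha hb
   = c * reach1 \<sigma> k ha hb * payoff_from n M \<sigma> \<tau> k l ha hb
     + (1 - c) * reach1 \<sigma>' k ha hb * payoff_from n M \<sigma>' \<tau> k l ha hb"
proof (induction n arbitrary: ha hb)
  case (Suc n)
  let ?m = "mix_strat1 c \<sigma> \<sigma>'"
  let ?R = "reach1 ?m k" and ?X = "reach1 \<sigma> k" and ?X' = "reach1 \<sigma>' k"
  have len: "length (ha @ [a]) = length (hb @ [b])" for a b using Suc.prems by simp
  have "?R ha hb * payoff_from (Suc n) M ?m \<tau> k l ha hb
     = (\<Sum>a\<in>UNIV. \<Sum>b\<in>UNIV. \<tau> l ha hb b * (?R ha hb * ?m k ha hb a) *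
            (M k l a b + payoff_from n M ?m \<tau> k l (ha @ [a]) (hb @ [b])))"
    by (simp add: sum_distrib_left algebra_simps)
  also have "\<dots> = (\<Sum>a\<in>UNIV. \<Sum>b\<in>UNIV. \<tau> l ha hb b *
      ((c * ?X (ha @ [a]) (hb @ [b]) + (1 - c) * ?X' (ha @ [a]) (hb @ [b])) * M k l a b
       + (c * ?X (ha @ [a]) (hb @ [b]) * payoff_from n M \<sigma> \<tau> k l (ha @ [a]) (hb @ [b])
         + (1 - c) * ?X' (ha @ [a]) (hb @ [b]) * payoff_from n M \<sigma>' \<tau> k l (ha @ [a]) (hb @ [b]))))"
  proof (intro sum.cong refl)
    fix a b
    have "?R ha hb * ?m k ha hb a = ?R (ha @ [a]) (hb @ [b])" using Suc.prems by (simp add: reach1_snoc)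
    then show "\<tau> l ha hb b * (?R ha hb * ?m k ha hb a) *
            (M k l a b + payoff_from n M ?m \<tau> k l (ha @ [a]) (hb @ [b])) =
          \<tau> l ha hb b *
      ((c * ?X (ha @ [a]) (hb @ [b]) + (1 - c) * ?X' (ha @ [a]) (hb @ [b])) * M k l a b
       + (c * ?X (ha @ [a]) (hb @ [b]) * payoff_from n M \<sigma> \<tau> k l (ha @ [a]) (hb @ [b])
         + (1 - c) * ?X' (ha @ [a]) (hb @ [b]) * payoff_from n M \<sigma>' \<tau> k l (ha @ [a]) (hb @ [b])))"
      unfolding Suc.IH[OF len, symmetric] reach1_mix_strat1[OF strats c len, symmetric]
      by (simp add: algebra_simps)
  qed
  also have "\<dots> = c * ?X ha hb * payoff_from (Suc n) M \<sigma> \<tau> k l ha hb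
     + (1 - c) * ?X' ha hb * payoff_from (Suc n) M \<sigma>' \<tau> k l ha hb"
    using Suc.prems by (simp add: reach1_snoc sum_distrib_left sum.distrib[symmetric] algebra_simps)
  finally show ?case .
qed simp

lemma gamma_mix_strat1:
  fixes \<sigma> \<sigma>' :: "'k::finite \<Rightarrow> 'a::finite list \<Rightarrow> 'b::finite list \<Rightarrow> 'a \<Rightarrow> real"
  assumes strats: "\<sigma> \<in> strat1" "\<sigma>' \<in> strat1" and c: "0 \<le> c" "c \<le> 1"
  shows "gamma T M p q (mix_strat1 c \<sigma> \<sigma>') \<tau> = c * gamma T M p q \<sigma> \<tau> + (1 - c) * gamma T M p q \<sigma>' \<tau>"
proof -
  have "cond_payoff T M (mix_strat1 c \<sigma> \<sigma>') \<tau> k l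
      = c * cond_payoff T M \<sigma> \<tau> k l + (1 - c) * cond_payoff T M \<sigma>' \<tau> k l" for k l
    using payoff_from_mix_strat1[OF strats c, of "[]" "[]" k T M \<tau> l] by (simp add: cond_payoff_def)
  then show ?thesis unfolding gamma_def
    by (simp add: sum_distrib_left sum.distrib[symmetric] ring_distribs mult.left_commute)
qed

lemma gamma_convex1:
  assumes "\<sigma> \<in> strat1" "\<sigma>' \<in> strat1" "0 \<le> c" "c \<le> 1"
  shows "\<exists>\<sigma>''\<in>strat1. \<forall>T M p q \<tau>.
           gamma T M p q \<sigma>'' \<tau> = c * gamma T M p q \<sigma> \<tau> + (1 - c) * gamma T M p q \<sigma>' \<tau>"
  using mix_strat1_strat1[OF assms] gamma_mix_strat1[OF assms] by blast

lemma gamma_convex2: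
  fixes \<tau> \<tau>' :: "'l::finite \<Rightarrow> 'a::finite list \<Rightarrow> 'b::finite list \<Rightarrow> 'b \<Rightarrow> real"
  assumes "\<tau> \<in> strat2" "\<tau>' \<in> strat2" "0 \<le> c" "c \<le> 1"
  shows "\<exists>\<tau>''\<in>strat2. \<forall>T M p q (\<sigma> :: 'k::finite \<Rightarrow> 'a list \<Rightarrow> 'b list \<Rightarrow> 'a \<Rightarrow> real).
           gamma T M p q \<sigma> \<tau>'' = c * gamma T M p q \<sigma> \<tau> + (1 - c) * gamma T M p q \<sigma> \<tau>'"
proof -
  obtain \<rho> where "\<rho> \<in> strat1" and \<rho>: "\<And>T M p q (\<sigma> :: 'k::finite \<Rightarrow> 'b list \<Rightarrow> 'a list \<Rightarrow> 'a \<Rightarrow> real). gamma T M p q \<rho> \<sigma>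
      = c * gamma T M p q (flip_hist \<tau>) \<sigma> + (1 - c) * gamma T M p q (flip_hist \<tau>') \<sigma>"
    using gamma_convex1[of "flip_hist \<tau>" "flip_hist \<tau>'" c] assms by (auto simp: flip_hist_strat2)
  then have "flip_hist \<rho> \<in> strat2" by (simp flip: flip_hist_strat2)
  moreover have "gamma T M p q \<sigma> (flip_hist \<rho>) = c * gamma T M p q \<sigma> \<tau> + (1 - c) * gamma T M p q \<sigma> \<tau>'"
    for T M p q and \<sigma> :: "'k::finite \<Rightarrow> 'a list \<Rightarrow> 'b list \<Rightarrow> 'a \<Rightarrow> real"
    by (simp add: gamma_flip_hist[of T M p q \<sigma>] \<rho>)
  ultimately show ?thesis by blast
qed

lemma gamma_convex_combination2:
  fixes F :: "('l::finite \<Rightarrow> 'a::finite list \<Rightarrow> 'b::finite list \<Rightarrow> 'b \<Rightarrow> real) set"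
  assumes "finite F" "F \<noteq> {}" "F \<subseteq> strat2" "\<forall>i\<in>F. 0 \<le> w i" "sum w F = 1"
  shows "\<exists>\<tau>\<in>strat2. \<forall>\<sigma> :: 'k::finite \<Rightarrow> 'a list \<Rightarrow> 'b list \<Rightarrow> 'a \<Rightarrow> real.
           gamma T M p q \<sigma> \<tau> = (\<Sum>i\<in>F. w i * gamma T M p q \<sigma> i)"
  using assms
proof (induction F arbitrary: w rule: finite_ne_induct)
  case (singleton j)
  then show ?case by auto
next
  case (insert j F)
  have wF: "\<forall>i\<in>F. 0 \<le> w i" and wj: "0 \<le> w j" and total: "w j + sum w F = 1"
    using insert by auto
  show ?case
  proof (cases "sum w F = 0")
    case True
    then have "\<forall>i\<in>F. w i = 0" using wF insert.hyps(1) sum_nonneg_eq_0_iff by blast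
    then show ?thesis using insert total True by (intro bexI[of _ j]) auto
  next
    case False
    then have pos: "0 < sum w F" using wF by (simp add: order_less_le sum_nonneg)
    obtain \<tau>F where "\<tau>F \<in> strat2"
      and \<tau>F: "\<And>\<sigma>. gamma T M p q \<sigma> \<tau>F = (\<Sum>i\<in>F. w i / sum w F * gamma T M p q \<sigma> i)"
      using insert.IH[of "\<lambda>i. w i / sum w F"] insert.prems wF pos
      by (auto simp: sum_divide_distrib[symmetric])
    have "j \<in> strat2" "w j \<le> 1" using insert.prems total pos by auto
    then obtain \<tau> where "\<tau> \<in> strat2"
      and \<tau>: "\<And>\<sigma>. gamma T M p q \<sigma> \<tau> = w j * gamma T M p q \<sigma> j + (1 - w j) * gamma T M p q \<sigma> \<tau>F"
      using gamma_convex2[of j \<tau>F "w j"] \<open>\<tau>F \<in> strat2\<close> wj by blast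
    show ?thesis
    proof (intro bexI[OF _ \<open>\<tau> \<in> strat2\<close>] allI)
      fix \<sigma> :: "'k \<Rightarrow> 'a list \<Rightarrow> 'b list \<Rightarrow> 'a \<Rightarrow> real"
      have rest: "1 - w j = sum w F" using total by simp
      have "(1 - w j) * gamma T M p q \<sigma> \<tau>F = (\<Sum>i\<in>F. w i * gamma T M p q \<sigma> i)"
        unfolding rest \<tau>F sum_distrib_left using pos by (intro sum.cong refl) simp
      then show "gamma T M p q \<sigma> \<tau> = (\<Sum>i\<in>insert j F. w i * gamma T M p q \<sigma> i)"
        unfolding \<tau> sum.insert[OF insert.hyps(1,3)] by simp
    qed
  qed
qed

section \<open>A theorem of the alternative\<close>

lemma two_point_mix_pos:
  fixes x1 y1 x2 y2 :: real
  assumes "0 < x1" "y1 \<le> 0" "x2 \<le> 0" "0 < y2" "x2 * y1 < x1 * y2"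
  shows "\<exists>m. 0 \<le> m \<and> m \<le> 1 \<and> 0 < m * x1 + (1 - m) * x2 \<and> 0 < m * y1 + (1 - m) * y2"
proof -
  define D where "D = x1 - y1 + y2 - x2"
  define m where "m = (y2 - x2) / D"
  have D: "0 < D" using assms unfolding D_def by simp
  have m1: "1 - m = (x1 - y1) / D" using D unfolding m_def D_def by (simp add: field_simps)
  have "m * x1 + (1 - m) * x2 = (x1 * y2 - x2 * y1) / D"
    and "m * y1 + (1 - m) * y2 = (x1 * y2 - x2 * y1) / D"
    unfolding m1 unfolding m_def using D by (simp_all add: field_simps)
  moreover have "0 < (x1 * y2 - x2 * y1) / D" using D assms by simp
  moreover have "0 \<le> m" using D assms unfolding m_def by simp
  moreover have "m \<le> 1" using D assms unfolding m_def pos_divide_le_eq[OF D] by (simp add: D_def)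
  ultimately show ?thesis by metis
qed

lemma divide_in_unit_interval: "0 \<le> a \<Longrightarrow> a \<le> D \<Longrightarrow> 0 < D \<Longrightarrow> a / D \<in> {0..(1::real)}"
  by (simp add: divide_nonneg_pos pos_divide_le_eq)

lemma real_sets_separated:
  fixes X Y :: "real set"
  assumes "X \<subseteq> {0..1}" "Y \<subseteq> {0..1}" "\<And>x y. x \<in> X \<Longrightarrow> y \<in> Y \<Longrightarrow> x \<le> y"
  shows "\<exists>\<alpha>. 0 \<le> \<alpha> \<and> \<alpha> \<le> 1 \<and> (\<forall>x\<in>X. x \<le> \<alpha>) \<and> (\<forall>y\<in>Y. \<alpha> \<le> y)"
proof (cases "X = {}")
  case True
  then show ?thesis using assms(2) by (intro exI[of _ 0]) auto
next
  case False
  have bdd: "bdd_above X" using assms(1) by (intro bdd_aboveI[of X 1]) auto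
  obtain x where "x \<in> X" using False by blast
  have upper: "\<forall>x\<in>X. x \<le> Sup X" using bdd by (simp add: cSup_upper)
  have "0 \<le> Sup X" using upper \<open>x \<in> X\<close> assms(1) by force
  moreover have "Sup X \<le> 1" using False assms(1) by (intro cSup_least) auto
  moreover have "\<forall>y\<in>Y. Sup X \<le> y" using False assms(3) by (auto intro: cSup_least)
  ultimately show ?thesis using upper by blast
qed

lemma convex_like_cross:
  fixes f g :: "'x \<Rightarrow> real"
  assumes mix: "\<And>s t c. s \<in> S \<Longrightarrow> t \<in> S \<Longrightarrow> 0 \<le> c \<Longrightarrow> c \<le> 1 \<Longrightarrow>
      \<exists>u\<in>S. f u = c * f s + (1 - c) * f t \<and> g u = c * g s + (1 - c) * g t"
    and cover: "\<And>s. s \<in> S \<Longrightarrow> f s \<le> 0 \<or> g s \<le> 0"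
    and "s \<in> S" "t \<in> S" "0 < f s" "0 < g t"
  shows "f s * g t \<le> f t * g s"
proof (rule ccontr)
  assume "\<not> f s * g t \<le> f t * g s"
  then have less: "f t * g s < f s * g t" by simp
  have "g s \<le> 0" "f t \<le> 0" using assms(3-6) cover by force+
  then obtain m where m: "0 \<le> m" "m \<le> 1"
    and pos: "0 < m * f s + (1 - m) * f t" "0 < m * g s + (1 - m) * g t"
    using two_point_mix_pos[OF \<open>0 < f s\<close> _ _ \<open>0 < g t\<close> less] by blast
  obtain u where "u \<in> S" "f u = m * f s + (1 - m) * f t" "g u = m * g s + (1 - m) * g t"
    using mix[OF \<open>s \<in> S\<close> \<open>t \<in> S\<close> m] by blast
  then show False using cover[of u] pos by linarith
qed

text \<open>A point with \<open>f s > 0\<close> forces \<open>\<alpha> \<le> r s\<close> and a point with \<open>g t > 0\<close> forces \<open>r' t \<le> \<alpha>\<close>;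
  the inequality of \<open>convex_like_cross\<close> says exactly that these constraints are compatible.\<close>

lemma convex_like_alternative2:
  fixes f g :: "'x \<Rightarrow> real"
  assumes mix: "\<And>s t c. s \<in> S \<Longrightarrow> t \<in> S \<Longrightarrow> 0 \<le> c \<Longrightarrow> c \<le> 1 \<Longrightarrow>
      \<exists>u\<in>S. f u = c * f s + (1 - c) * f t \<and> g u = c * g s + (1 - c) * g t"
    and cover: "\<And>s. s \<in> S \<Longrightarrow> f s \<le> 0 \<or> g s \<le> 0"
  shows "\<exists>\<alpha>. 0 \<le> \<alpha> \<and> \<alpha> \<le> 1 \<and> (\<forall>s\<in>S. \<alpha> * f s + (1 - \<alpha>) * g s \<le> 0)"
proof -
  define A B where "A = {s\<in>S. 0 < f s}" and "B = {s\<in>S. 0 < g s}"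
  define r where "r s = - g s / (f s - g s)" for s
  define r' where "r' t = g t / (g t - f t)" for t
  have A: "0 < f s - g s" "g s \<le> 0" if "s \<in> A" for s
    using that cover[of s] unfolding A_def by auto
  have B: "0 < g t - f t" "f t \<le> 0" if "t \<in> B" for t
    using that cover[of t] unfolding B_def by auto
  have cross: "f s * g t \<le> f t * g s" if "s \<in> A" "t \<in> B" for s t
    using convex_like_cross[OF mix cover] that unfolding A_def B_def by blast
  have "r s \<in> {0..1}" if "s \<in> A" for s
  proof -
    have "0 < f s" using that unfolding A_def by simp
    then show ?thesis using A[OF that] unfolding r_def by (intro divide_in_unit_interval) simp_all
  qed
  moreover have "r' t \<in> {0..1}" if "t \<in> B" for t
  proof -
    have "0 < g t" using that unfolding B_def by simp
    then show ?thesis using B[OF that] unfolding r'_def by (intro divide_in_unit_interval) simp_all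
  qed
  ultimately have ranges: "r' ` B \<subseteq> {0..1}" "r ` A \<subseteq> {0..1}" by auto
  have "r' t \<le> r s" if "t \<in> B" "s \<in> A" for s t
  proof -
    have "g t * (f s - g s) \<le> - g s * (g t - f t)"
      using cross[OF that(2,1)] by (simp add: algebra_simps)
    then show ?thesis
      unfolding r_def r'_def pos_divide_le_eq[OF B(1)[OF that(1)]] times_divide_eq_left
        pos_le_divide_eq[OF A(1)[OF that(2)]] .
  qed
  then obtain \<alpha> where "0 \<le> \<alpha> \<and> \<alpha> \<le> 1 \<and> (\<forall>x\<in>r' ` B. x \<le> \<alpha>) \<and> (\<forall>y\<in>r ` A. \<alpha> \<le> y)"
    using real_sets_separated[OF ranges] by blast
  then have \<alpha>: "0 \<le> \<alpha>" "\<alpha> \<le> 1" "\<And>t. t \<in> B \<Longrightarrow> r' t \<le> \<alpha>" "\<And>s. s \<in> A \<Longrightarrow> \<alpha> \<le> r s"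
    by auto
  have "\<alpha> * f s + (1 - \<alpha>) * g s \<le> 0" if sS: "s \<in> S" for s
  proof -
    consider "s \<in> A" | "s \<in> B" | "f s \<le> 0" "g s \<le> 0"
      using sS unfolding A_def B_def by (cases "0 < f s"; cases "0 < g s") auto
    then show ?thesis
    proof cases
      case 1
      have "\<alpha> * (f s - g s) \<le> - g s"
        using \<alpha>(4)[OF 1] unfolding r_def pos_le_divide_eq[OF A(1)[OF 1]] .
      then show ?thesis by (simp add: algebra_simps)
    next
      case 2
      have "g s \<le> \<alpha> * (g s - f s)"
        using \<alpha>(3)[OF 2] unfolding r'_def pos_divide_le_eq[OF B(1)[OF 2]] by (simp add: mult.commute)
      then show ?thesis by (simp add: algebra_simps)
    next
      case 3
      have "\<alpha> * f s \<le> 0" "(1 - \<alpha>) * g s \<le> 0"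
        using 3 \<alpha>(1,2) by (simp_all add: mult_nonneg_nonpos)
      then show ?thesis by linarith
    qed
  qed
  then show ?thesis using \<alpha> by blast
qed

lemma convex_comb_pos:
  fixes x y c :: real
  assumes "0 < x" "0 < y" "0 \<le> c" "c \<le> 1"
  shows "0 < c * x + (1 - c) * y"
proof (cases "c = 0")
  case False
  with assms have "0 < c * x" by simp
  moreover have "0 \<le> (1 - c) * y" using assms by simp
  ultimately show ?thesis by simp
qed (use assms in simp)

lemma sum_weighted_affine:
  fixes f :: "'i \<Rightarrow> 'x \<Rightarrow> real" and w :: "'i \<Rightarrow> real"
  assumes "\<forall>i\<in>F. f i u = c * f i s + (1 - c) * f i t"
  shows "(\<Sum>i\<in>F. w i * f i u) = c * (\<Sum>i\<in>F. w i * f i s) + (1 - c) * (\<Sum>i\<in>F. w i * f i t)"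
proof -
  have "(\<Sum>i\<in>F. w i * f i u) = (\<Sum>i\<in>F. c * (w i * f i s) + (1 - c) * (w i * f i t))"
    using assms by (intro sum.cong refl) (simp add: distrib_left mult.left_commute)
  then show ?thesis by (simp add: sum.distrib sum_distrib_left)
qed

lemma weights_insert:
  fixes w' :: "'i \<Rightarrow> real"
  assumes "finite F" "j \<notin> F" "\<forall>i\<in>F. 0 \<le> w' i" "sum w' F = 1" "0 \<le> \<alpha>" "\<alpha> \<le> 1"
  shows "\<exists>w. (\<forall>i\<in>insert j F. 0 \<le> w i) \<and> sum w (insert j F) = 1
    \<and> (\<forall>h :: 'i \<Rightarrow> real. (\<Sum>i\<in>insert j F. w i * h i) = (1 - \<alpha>) * h j + \<alpha> * (\<Sum>i\<in>F. w' i * h i))"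
proof -
  define w where "w i = (if i = j then 1 - \<alpha> else \<alpha> * w' i)" for i
  have comb: "(\<Sum>i\<in>insert j F. w i * h i) = (1 - \<alpha>) * h j + \<alpha> * (\<Sum>i\<in>F. w' i * h i)"
    for h :: "'i \<Rightarrow> real"
  proof -
    have "(\<Sum>i\<in>F. w i * h i) = (\<Sum>i\<in>F. \<alpha> * (w' i * h i))"
      using assms(2) by (intro sum.cong) (auto simp: w_def)
    then show ?thesis
      using assms(1,2) by (simp add: w_def sum_distrib_left)
  qed
  moreover have "\<forall>i\<in>insert j F. 0 \<le> w i" using assms(3,5,6) by (simp add: w_def)
  moreover have "sum w (insert j F) = 1" using comb[of "\<lambda>_. 1"] assms(4) by simp
  ultimately show ?thesis by blast
qed

lemma convex_like_positive_part:
  fixes f :: "'i \<Rightarrow> 'x \<Rightarrow> real"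
  assumes mix: "\<And>s t c. s \<in> S \<Longrightarrow> t \<in> S \<Longrightarrow> 0 \<le> c \<Longrightarrow> c \<le> 1 \<Longrightarrow>
           \<exists>u\<in>S. \<forall>i\<in>I. f i u = c * f i s + (1 - c) * f i t"
    and "j \<in> I" "s \<in> {s\<in>S. 0 < f j s}" "t \<in> {s\<in>S. 0 < f j s}" "0 \<le> c" "c \<le> 1"
  shows "\<exists>u\<in>{s\<in>S. 0 < f j s}. \<forall>i\<in>I. f i u = c * f i s + (1 - c) * f i t"
proof -
  obtain u where "u \<in> S" and u: "\<forall>i\<in>I. f i u = c * f i s + (1 - c) * f i t"
    using mix[of s t c] assms(3-6) by blast
  moreover have "0 < f j u"
    using u \<open>j \<in> I\<close> convex_comb_pos[of "f j s" "f j t" c] assms(3-6) by simp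
  ultimately show ?thesis by blast
qed

text \<open>A finite theorem of the alternative (Ky Fan). The induction restricts \<open>S\<close> to the points
  where \<open>f j\<close> is positive, where the remaining functions still cover, and combines the resulting
  weights with \<open>f j\<close> by the two-function case.\<close>

lemma convex_like_alternative:
  fixes f :: "'i \<Rightarrow> 'x \<Rightarrow> real"
  assumes "finite I" "I \<noteq> {}"
    and "\<And>s t c. s \<in> S \<Longrightarrow> t \<in> S \<Longrightarrow> 0 \<le> c \<Longrightarrow> c \<le> 1 \<Longrightarrow>
           \<exists>u\<in>S. \<forall>i\<in>I. f i u = c * f i s + (1 - c) * f i t"
    and "\<And>s. s \<in> S \<Longrightarrow> \<exists>i\<in>I. f i s \<le> 0"
  shows "\<exists>w. (\<forall>i\<in>I. 0 \<le> w i) \<and> sum w I = 1 \<and> (\<forall>s\<in>S. (\<Sum>i\<in>I. w i * f i s) \<le> 0)"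
  using assms
proof (induction I arbitrary: S rule: finite_ne_induct)
  case (singleton j)
  then show ?case by (intro exI[of _ "\<lambda>_. 1"]) auto
next
  case (insert j F)
  note mix = insert.prems(1) and cover = insert.prems(2)
  define S' where "S' = {s\<in>S. 0 < f j s}"
  have "\<exists>u\<in>S'. \<forall>i\<in>F. f i u = c * f i s + (1 - c) * f i t"
    if "s \<in> S'" "t \<in> S'" "0 \<le> c" "c \<le> 1" for s t c
    using convex_like_positive_part[OF mix insertI1, of s t c] that unfolding S'_def by blast
  moreover have "\<exists>i\<in>F. f i s \<le> 0" if "s \<in> S'" for s
    using cover[of s] that unfolding S'_def by fastforce
  ultimately obtain w' where w': "\<forall>i\<in>F. 0 \<le> w' i" "sum w' F = 1"
    and w'S': "\<forall>s\<in>S'. (\<Sum>i\<in>F. w' i * f i s) \<le> 0"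
    using insert.IH[of S'] by blast
  define g where "g s = (\<Sum>i\<in>F. w' i * f i s)" for s
  have "\<exists>u\<in>S. g u = c * g s + (1 - c) * g t \<and> f j u = c * f j s + (1 - c) * f j t"
    if st: "s \<in> S" "t \<in> S" "0 \<le> c" "c \<le> 1" for s t c
  proof -
    obtain u where "u \<in> S" and u: "\<forall>i\<in>insert j F. f i u = c * f i s + (1 - c) * f i t"
      using mix[OF st] by blast
    moreover have "g u = c * g s + (1 - c) * g t"
      unfolding g_def by (rule sum_weighted_affine) (use u in blast)
    moreover have "f j u = c * f j s + (1 - c) * f j t" using u by blast
    ultimately show ?thesis by blast
  qed
  moreover have "g s \<le> 0 \<or> f j s \<le> 0" if "s \<in> S" for s
    using w'S' that unfolding S'_def g_def by (auto simp: not_less)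
  ultimately obtain \<alpha> where \<alpha>: "0 \<le> \<alpha>" "\<alpha> \<le> 1" "\<forall>s\<in>S. \<alpha> * g s + (1 - \<alpha>) * f j s \<le> 0"
    using convex_like_alternative2[of S g "f j"] by blast
  obtain w where "\<forall>i\<in>insert j F. 0 \<le> w i" "sum w (insert j F) = 1"
    and comb: "\<And>h. (\<Sum>i\<in>insert j F. w i * h i) = (1 - \<alpha>) * h j + \<alpha> * (\<Sum>i\<in>F. w' i * h i)"
    using weights_insert[OF insert.hyps(1,3) w' \<alpha>(1,2)] by blast
  moreover have "(\<Sum>i\<in>insert j F. w i * f i s) \<le> 0" if "s \<in> S" for s
    using comb[of "\<lambda>i. f i s"] \<alpha>(3) that unfolding g_def by (simp add: add.commute)
  ultimately show ?case by blast
qed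

section \<open>Pure strategies of player 2\<close>

definition at_node :: "('l \<Rightarrow> 'a list \<Rightarrow> 'b list \<Rightarrow> 'b \<Rightarrow> real) \<Rightarrow> 'l \<times> 'a list \<times> 'b list \<Rightarrow> 'b \<Rightarrow> real" where
  "at_node \<tau> d = \<tau> (fst d) (fst (snd d)) (snd (snd d))"

definition node_upd ::
    "('l \<Rightarrow> 'a list \<Rightarrow> 'b list \<Rightarrow> 'b \<Rightarrow> real) \<Rightarrow> 'l \<times> 'a list \<times> 'b list \<Rightarrow> ('b \<Rightarrow> real)
      \<Rightarrow> 'l \<Rightarrow> 'a list \<Rightarrow> 'b list \<Rightarrow> 'b \<Rightarrow> real" where
  "node_upd \<tau> d \<pi> = (\<lambda>l ha hb. if (l, ha, hb) = d then \<pi> else \<tau> l ha hb)"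

lemma at_node_node_upd: "at_node (node_upd \<tau> d \<pi>) d' = (if d' = d then \<pi> else at_node \<tau> d')"
  by (cases d') (auto simp: at_node_def node_upd_def)

lemma node_upd_at_node: "node_upd \<tau> d (at_node \<tau> d) = \<tau>"
  by (auto simp: node_upd_def at_node_def fun_eq_iff)

lemma node_upd_strat2: "\<tau> \<in> strat2 \<Longrightarrow> distr \<pi> \<Longrightarrow> node_upd \<tau> d \<pi> \<in> strat2"
  by (simp add: strat2_def node_upd_def)

lemma payoff_from_node_upd_here:
  assumes "d = (l, ha, hb)"
  shows "payoff_from (Suc n) M \<sigma> (node_upd \<tau> d \<pi>) k l ha hb
    = (\<Sum>b\<in>UNIV. \<pi> b * (\<Sum>a\<in>UNIV. \<sigma> k ha hb a * (M k l a b + payoff_from n M \<sigma> \<tau> k l (ha @ [a]) (hb @ [b]))))"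
proof -
  \<comment> \<open>after the node d the history is longer, so d is never consulted again\<close>
  have later: "payoff_from n M \<sigma> (node_upd \<tau> d \<pi>) k l (ha @ [a]) hb' = payoff_from n M \<sigma> \<tau> k l (ha @ [a]) hb'"
    for a hb'
    by (rule payoff_from_cong_long[of "Suc (length ha)"]) (auto simp: node_upd_def assms)
  have here: "node_upd \<tau> d \<pi> l ha hb = \<pi>" using assms by (simp add: node_upd_def)
  have "payoff_from (Suc n) M \<sigma> (node_upd \<tau> d \<pi>) k l ha hb
      = (\<Sum>a\<in>UNIV. \<Sum>b\<in>UNIV. \<pi> b * (\<sigma> k ha hb a * (M k l a b + payoff_from n M \<sigma> \<tau> k l (ha @ [a]) (hb @ [b]))))"
    by (simp only: payoff_from.simps here later mult.commute mult.left_commute mult.assoc)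
  also have "\<dots> = (\<Sum>b\<in>UNIV. \<Sum>a\<in>UNIV. \<pi> b * (\<sigma> k ha hb a * (M k l a b + payoff_from n M \<sigma> \<tau> k l (ha @ [a]) (hb @ [b]))))"
    by (rule sum.swap)
  finally show ?thesis by (simp only: sum_distrib_left)
qed

lemma payoff_from_node_upd:
  fixes \<pi> :: "'b::finite \<Rightarrow> real"
  assumes "distr \<pi>"
  shows "payoff_from n M \<sigma> (node_upd \<tau> d \<pi>) k l ha hb
     = (\<Sum>b\<in>UNIV. \<pi> b * payoff_from n M \<sigma> (node_upd \<tau> d (point_distr b)) k l ha hb)"
proof (induction n arbitrary: ha hb)
  case 0
  then show ?case by simp
next
  case (Suc n)
  show ?case
  proof (cases "(l, ha, hb) = d")
    case True
    show ?thesis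
      unfolding payoff_from_node_upd_here[OF True[symmetric]] by (simp add: sum_point_distr_mult)
  next
    case False
    then have here: "node_upd \<tau> d X l ha hb = \<tau> l ha hb" for X by (simp add: node_upd_def)
    let ?c = "\<lambda>a b'. \<sigma> k ha hb a * \<tau> l ha hb b'"
    let ?X = "\<lambda>a b' b. M k l a b' + payoff_from n M \<sigma> (node_upd \<tau> d (point_distr b)) k l (ha @ [a]) (hb @ [b'])"
    have avg: "x + (\<Sum>b\<in>UNIV. \<pi> b * y b) = (\<Sum>b\<in>UNIV. \<pi> b * (x + y b))" for x y
      using assms by (simp add: distrib_left sum.distrib sum_distr_const)
    have "payoff_from (Suc n) M \<sigma> (node_upd \<tau> d \<pi>) k l ha hb
       = (\<Sum>a\<in>UNIV. \<Sum>b'\<in>UNIV. ?c a b' * (\<Sum>b\<in>UNIV. \<pi> b * ?X a b' b))"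
      by (simp only: payoff_from.simps here Suc.IH avg)
    also have "\<dots> = (\<Sum>a\<in>UNIV. \<Sum>b'\<in>UNIV. \<Sum>b\<in>UNIV. \<pi> b * (?c a b' * ?X a b' b))"
      by (simp only: sum_distrib_left mult.left_commute)
    also have "\<dots> = (\<Sum>a\<in>UNIV. \<Sum>b\<in>UNIV. \<Sum>b'\<in>UNIV. \<pi> b * (?c a b' * ?X a b' b))"
      by (rule sum.cong[OF refl], rule sum.swap)
    also have "\<dots> = (\<Sum>b\<in>UNIV. \<Sum>a\<in>UNIV. \<Sum>b'\<in>UNIV. \<pi> b * (?c a b' * ?X a b' b))"
      by (rule sum.swap)
    also have "\<dots> = (\<Sum>b\<in>UNIV. \<pi> b * payoff_from (Suc n) M \<sigma> (node_upd \<tau> d (point_distr b)) k l ha hb)"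
      by (simp only: payoff_from.simps here sum_distrib_left)
    finally show ?thesis .
  qed
qed

lemma gamma_node_upd:
  fixes \<pi> :: "'b::finite \<Rightarrow> real"
  assumes "distr \<pi>"
  shows "gamma T M p q \<sigma> (node_upd \<tau> d \<pi>) = (\<Sum>b\<in>UNIV. \<pi> b * gamma T M p q \<sigma> (node_upd \<tau> d (point_distr b)))"
proof -
  have "gamma T M p q \<sigma> (node_upd \<tau> d \<pi>)
      = (\<Sum>k\<in>UNIV. \<Sum>l\<in>UNIV. \<Sum>b\<in>UNIV. \<pi> b * (p k * q l * cond_payoff T M \<sigma> (node_upd \<tau> d (point_distr b)) k l))"
    unfolding gamma_def cond_payoff_def payoff_from_node_upd[OF assms]
    by (simp only: sum_distrib_left mult.left_commute)
  also have "\<dots> = (\<Sum>b\<in>UNIV. \<Sum>k\<in>UNIV. \<Sum>l\<in>UNIV. \<pi> b * (p k * q l * cond_payoff T M \<sigma> (node_upd \<tau> d (point_distr b)) k l))"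
    by (subst sum.swap, rule sum.cong[OF refl], rule sum.swap)
  also have "\<dots> = (\<Sum>b\<in>UNIV. \<pi> b * gamma T M p q \<sigma> (node_upd \<tau> d (point_distr b)))"
    unfolding gamma_def by (simp only: sum_distrib_left)
  finally show ?thesis .
qed

lemma purify_nodes:
  fixes \<tau> :: "'l::finite \<Rightarrow> 'a::finite list \<Rightarrow> 'b::finite list \<Rightarrow> 'b \<Rightarrow> real"
  assumes "finite S" "\<tau> \<in> strat2"
  shows "\<exists>\<tau>'\<in>strat2. (\<forall>d. d \<notin> S \<longrightarrow> at_node \<tau>' d = at_node \<tau> d)
      \<and> (\<forall>d\<in>S. \<exists>b. at_node \<tau>' d = point_distr b) \<and> gamma T M p q \<sigma> \<tau>' \<le> gamma T M p q \<sigma> \<tau>"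
  using assms
proof (induction S rule: finite_induct)
  case empty
  then show ?case by blast
next
  case (insert d S)
  then obtain \<tau>1 where "\<tau>1 \<in> strat2" and \<tau>1: "\<forall>d. d \<notin> S \<longrightarrow> at_node \<tau>1 d = at_node \<tau> d"
      "\<forall>d\<in>S. \<exists>b. at_node \<tau>1 d = point_distr b" "gamma T M p q \<sigma> \<tau>1 \<le> gamma T M p q \<sigma> \<tau>"
    by blast
  have "distr (at_node \<tau>1 d)" using \<open>\<tau>1 \<in> strat2\<close> by (simp add: at_node_def strat2D)
  then obtain b where "gamma T M p q \<sigma> (node_upd \<tau>1 d (point_distr b))
      \<le> (\<Sum>b\<in>UNIV. at_node \<tau>1 d b * gamma T M p q \<sigma> (node_upd \<tau>1 d (point_distr b)))"
    using exists_le_sum_distr[OF \<open>distr (at_node \<tau>1 d)\<close>,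
        of "\<lambda>b. gamma T M p q \<sigma> (node_upd \<tau>1 d (point_distr b))"] by blast
  also have "\<dots> = gamma T M p q \<sigma> \<tau>1"
    using gamma_node_upd[OF \<open>distr (at_node \<tau>1 d)\<close>, of T M p q \<sigma> \<tau>1 d] by (simp add: node_upd_at_node)
  finally have "gamma T M p q \<sigma> (node_upd \<tau>1 d (point_distr b)) \<le> gamma T M p q \<sigma> \<tau>"
    using \<tau>1(3) by simp
  moreover have "node_upd \<tau>1 d (point_distr b) \<in> strat2"
    using \<open>\<tau>1 \<in> strat2\<close> distr_point_distr by (rule node_upd_strat2)
  ultimately show ?case using \<tau>1(1,2)
    by (intro bexI[of _ "node_upd \<tau>1 d (point_distr b)"]) (auto simp: at_node_node_upd)
qed

definition early_nodes :: "nat \<Rightarrow> ('l \<times> 'a list \<times> 'b list) set" where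
  "early_nodes T = {d. length (fst (snd d)) < T \<and> length (snd (snd d)) < T}"

lemma finite_early_nodes: "finite (early_nodes T :: ('l::finite \<times> 'a::finite list \<times> 'b::finite list) set)"
proof -
  have "finite {xs :: 'a list. length xs \<le> T}" "finite {xs :: 'b list. length xs \<le> T}"
    using finite_lists_length_le[OF finite_UNIV, of T] by simp_all
  then have "finite ((UNIV :: 'l set) \<times> {xs :: 'a list. length xs \<le> T} \<times> {xs :: 'b list. length xs \<le> T})"
    by (simp add: finite_cartesian_product)
  then show ?thesis by (rule finite_subset[rotated]) (auto simp: early_nodes_def)
qed

text \<open>Pure strategies are normalised to play \<open>undefined\<close> beyond stage \<open>T\<close>, which does not affect
  the payoff and leaves only finitely many of them.\<close>

definition pure_strat2 :: "nat \<Rightarrow> ('l \<times> 'a list \<times> 'b list \<Rightarrow> 'b) \<Rightarrow> 'l \<Rightarrow> 'a list \<Rightarrow> 'b list \<Rightarrow> 'b \<Rightarrow> real" where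
  "pure_strat2 T g l ha hb =
     (if (l, ha, hb) \<in> early_nodes T then point_distr (g (l, ha, hb)) else point_distr undefined)"

definition pure_strats2 :: "nat \<Rightarrow> ('l \<Rightarrow> 'a list \<Rightarrow> 'b list \<Rightarrow> 'b \<Rightarrow> real) set" where
  "pure_strats2 T = pure_strat2 T ` {g. \<forall>d. (d \<in> early_nodes T \<longrightarrow> g d \<in> UNIV) \<and> (d \<notin> early_nodes T \<longrightarrow> g d = undefined)}"

lemma finite_pure_strats2:
  "finite (pure_strats2 T :: ('l::finite \<Rightarrow> 'a::finite list \<Rightarrow> 'b::finite list \<Rightarrow> 'b \<Rightarrow> real) set)"
  unfolding pure_strats2_def
  by (intro finite_imageI finite_set_of_finite_funs finite_early_nodes finite_UNIV)

lemma pure_strats2_subset: "pure_strats2 T \<subseteq> (strat2 :: ('l \<Rightarrow> 'a list \<Rightarrow> 'b::finite list \<Rightarrow> 'b \<Rightarrow> real) set)"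
  by (auto simp: pure_strats2_def pure_strat2_def strat2_def distr_point_distr)

lemma pure_strats2_nonempty: "pure_strats2 T \<noteq> {}"
proof -
  have "pure_strat2 T (\<lambda>_. undefined) \<in> pure_strats2 T"
    unfolding pure_strats2_def by (rule imageI) simp
  then show ?thesis by (metis empty_iff)
qed

lemma pure_strats2_memI:
  assumes "\<forall>d. d \<notin> early_nodes T \<longrightarrow> at_node \<tau> d = point_distr undefined"
    and "\<forall>d\<in>early_nodes T. \<exists>b. at_node \<tau> d = point_distr b"
  shows "\<tau> \<in> pure_strats2 T"
proof -
  define g where "g d = (if d \<in> early_nodes T then SOME b. at_node \<tau> d = point_distr b else undefined)" for d
  have pointwise: "\<tau> l ha hb = pure_strat2 T g l ha hb" for l ha hb
  proof (cases "(l, ha, hb) \<in> early_nodes T")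
    case True
    then obtain b where b: "at_node \<tau> (l, ha, hb) = point_distr b" using assms(2) by blast
    have "\<tau> l ha hb = at_node \<tau> (l, ha, hb)" by (simp add: at_node_def)
    also have "\<dots> = point_distr (SOME b. at_node \<tau> (l, ha, hb) = point_distr b)"
      using b by (rule someI)
    also have "\<dots> = pure_strat2 T g l ha hb" using True by (simp add: pure_strat2_def g_def)
    finally show ?thesis .
  next
    case False
    then show ?thesis using assms(1) by (simp add: pure_strat2_def at_node_def)
  qed
  then have "\<tau> = pure_strat2 T g" by (intro ext) (simp add: pointwise)
  then show ?thesis unfolding pure_strats2_def by (rule image_eqI[where x = g]) (simp add: g_def)
qed

lemma exists_pure_strat2_le:
  fixes \<tau> :: "'l::finite \<Rightarrow> 'a::finite list \<Rightarrow> 'b::finite list \<Rightarrow> 'b \<Rightarrow> real"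
  assumes "\<tau> \<in> strat2"
  shows "\<exists>\<tau>'\<in>pure_strats2 T. gamma T M p q \<sigma> \<tau>' \<le> gamma T M p q \<sigma> \<tau>"
proof -
  \<comment> \<open>the nodes outside the first T stages do not influence the payoff\<close>
  define \<tau>0 where "\<tau>0 l ha hb = (if (l, ha, hb) \<in> early_nodes T then \<tau> l ha hb else point_distr undefined)"
    for l ha hb
  have "\<tau>0 \<in> strat2" using assms distr_point_distr unfolding \<tau>0_def strat2_def by auto
  have "cond_payoff T M \<sigma> \<tau>0 k l = cond_payoff T M \<sigma> \<tau> k l" for k l
    unfolding cond_payoff_def by (rule payoff_from_cong_short[of T]) (auto simp: \<tau>0_def early_nodes_def)
  then have "gamma T M p q \<sigma> \<tau>0 = gamma T M p q \<sigma> \<tau>" by (simp add: gamma_def)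
  moreover obtain \<tau>' where \<tau>': "\<forall>d. d \<notin> early_nodes T \<longrightarrow> at_node \<tau>' d = at_node \<tau>0 d"
      "\<forall>d\<in>early_nodes T. \<exists>b. at_node \<tau>' d = point_distr b" "gamma T M p q \<sigma> \<tau>' \<le> gamma T M p q \<sigma> \<tau>0"
    using purify_nodes[OF finite_early_nodes \<open>\<tau>0 \<in> strat2\<close>] by blast
  moreover have "\<tau>' \<in> pure_strats2 T"
    using \<tau>'(1,2) by (intro pure_strats2_memI) (simp_all add: at_node_def \<tau>0_def)
  ultimately show ?thesis by (intro bexI[of _ \<tau>']) simp_all
qed

section \<open>The minimax inequality\<close>

lemma pure_strat2_holds_security1:
  fixes M :: "'k::finite \<Rightarrow> 'l::finite \<Rightarrow> 'a::finite \<Rightarrow> 'b::finite \<Rightarrow> real"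
  assumes "security1 T M p q \<sigma>s" "\<sigma> \<in> strat1"
  shows "\<exists>\<tau>\<in>pure_strats2 T. gamma T M p q \<sigma> \<tau> \<le> (INF \<tau>\<in>strat2. gamma T M p q \<sigma>s \<tau>)"
proof -
  let ?P = "pure_strats2 T :: ('l \<Rightarrow> 'a list \<Rightarrow> 'b list \<Rightarrow> 'b \<Rightarrow> real) set"
  obtain \<tau>0 where "\<tau>0 \<in> ?P" and \<tau>0: "\<And>\<tau>. \<tau> \<in> ?P \<Longrightarrow> gamma T M p q \<sigma> \<tau>0 \<le> gamma T M p q \<sigma> \<tau>"
    using ex_is_arg_min_if_finite[OF finite_pure_strats2 pure_strats2_nonempty, of "gamma T M p q \<sigma>"]
    unfolding is_arg_min_def by (auto simp: not_less)
  have "gamma T M p q \<sigma> \<tau>0 \<le> gamma T M p q \<sigma> \<tau>" if "\<tau> \<in> strat2" for \<tau>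
    using exists_pure_strat2_le[OF that, of T M p q \<sigma>] \<tau>0 by (meson order_trans)
  then have "gamma T M p q \<sigma> \<tau>0 \<le> (INF \<tau>\<in>strat2. gamma T M p q \<sigma> \<tau>)"
    by (intro cINF_greatest strat2_nonempty)
  also have "\<dots> \<le> (INF \<tau>\<in>strat2. gamma T M p q \<sigma>s \<tau>)"
    using assms unfolding security1_def by blast
  finally show ?thesis using \<open>\<tau>0 \<in> ?P\<close> by blast
qed

lemma minimax_security1:
  fixes M :: "'k::finite \<Rightarrow> 'l::finite \<Rightarrow> 'a::finite \<Rightarrow> 'b::finite \<Rightarrow> real"
    and \<sigma>s :: "'k \<Rightarrow> 'a list \<Rightarrow> 'b list \<Rightarrow> 'a \<Rightarrow> real"
  assumes "security1 T M p q \<sigma>s"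
  shows "\<exists>\<tau>\<in>(strat2 :: ('l \<Rightarrow> 'a list \<Rightarrow> 'b list \<Rightarrow> 'b \<Rightarrow> real) set).
           \<forall>\<sigma>\<in>strat1. gamma T M p q \<sigma> \<tau> \<le> (INF \<tau>\<in>strat2. gamma T M p q \<sigma>s \<tau>)"
proof -
  define V where "V = (INF \<tau>\<in>strat2. gamma T M p q \<sigma>s \<tau>)"
  define f where "f \<tau> \<sigma> = gamma T M p q \<sigma> \<tau> - V" for \<tau> \<sigma>
  let ?P = "pure_strats2 T :: ('l \<Rightarrow> 'a list \<Rightarrow> 'b list \<Rightarrow> 'b \<Rightarrow> real) set"
  have mix: "\<exists>u\<in>strat1. \<forall>\<tau>\<in>?P. f \<tau> u = c * f \<tau> \<sigma> + (1 - c) * f \<tau> \<sigma>'"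
    if mixable: "\<sigma> \<in> strat1" "\<sigma>' \<in> strat1" "0 \<le> c" "c \<le> 1" for \<sigma> \<sigma>' c
  proof -
    obtain u where "u \<in> strat1"
      and u: "\<And>\<tau>. gamma T M p q u \<tau> = c * gamma T M p q \<sigma> \<tau> + (1 - c) * gamma T M p q \<sigma>' \<tau>"
      using gamma_convex1[OF mixable] by blast
    show ?thesis
      by (intro bexI[OF _ \<open>u \<in> strat1\<close>] ballI) (simp add: f_def u algebra_simps)
  qed
  have cover: "\<exists>\<tau>\<in>?P. f \<tau> \<sigma> \<le> 0" if "\<sigma> \<in> strat1" for \<sigma>
    using pure_strat2_holds_security1[OF assms that] unfolding f_def V_def by auto
  obtain w where w: "\<forall>\<tau>\<in>?P. 0 \<le> w \<tau>" "sum w ?P = 1"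
    and below: "\<forall>\<sigma>\<in>strat1. (\<Sum>\<tau>\<in>?P. w \<tau> * f \<tau> \<sigma>) \<le> 0"
    using convex_like_alternative[OF finite_pure_strats2 pure_strats2_nonempty mix cover] by blast
  obtain \<tau>s where "\<tau>s \<in> strat2"
    and \<tau>s: "\<And>\<sigma>. gamma T M p q \<sigma> \<tau>s = (\<Sum>\<tau>\<in>?P. w \<tau> * gamma T M p q \<sigma> \<tau>)"
    using gamma_convex_combination2[OF finite_pure_strats2 pure_strats2_nonempty pure_strats2_subset w]
    by blast
  have "gamma T M p q \<sigma> \<tau>s - V = (\<Sum>\<tau>\<in>?P. w \<tau> * f \<tau> \<sigma>)" for \<sigma>
    unfolding f_def \<tau>s using w(2) by (simp add: right_diff_distrib sum_subtractf sum_distrib_right[symmetric])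
  then have "gamma T M p q \<sigma> \<tau>s \<le> V" if "\<sigma> \<in> strat1" for \<sigma>
    using below that by (metis diff_le_0_iff_le)
  then show ?thesis using \<open>\<tau>s \<in> strat2\<close> unfolding V_def by blast
qed

lemma sup_gamma_le_inf_gamma:
  assumes "security1 T M p q \<sigma>s" "security2 T M p q \<tau>s"
  shows "(SUP \<sigma>\<in>strat1. gamma T M p q \<sigma> \<tau>s) \<le> (INF \<tau>\<in>strat2. gamma T M p q \<sigma>s \<tau>)"
proof -
  obtain \<tau> where "\<tau> \<in> strat2" and \<tau>: "\<forall>\<sigma>\<in>strat1. gamma T M p q \<sigma> \<tau> \<le> (INF \<tau>\<in>strat2. gamma T M p q \<sigma>s \<tau>)"
    using minimax_security1[OF assms(1)] by blast
  have "(SUP \<sigma>\<in>strat1. gamma T M p q \<sigma> \<tau>s) \<le> (SUP \<sigma>\<in>strat1. gamma T M p q \<sigma> \<tau>)"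
    using assms(2) \<open>\<tau> \<in> strat2\<close> unfolding security2_def by blast
  also have "\<dots> \<le> (INF \<tau>\<in>strat2. gamma T M p q \<sigma>s \<tau>)"
    using \<tau> by (intro cSUP_least strat1_nonempty) blast
  finally show ?thesis .
qed

section \<open>The dual games\<close>

text \<open>The uniform bound \<open>C\<close> ensures that the suprema and infima over strategies in \<open>w0\<close>, \<open>u0\<close>,
  \<open>\<gamma>\<close> and the dual values are taken over bounded sets of reals, where they behave as expected.\<close>

lemma abs_sum_q_cond_payoff_le:
  fixes M :: "'k::finite \<Rightarrow> 'l::finite \<Rightarrow> 'a::finite \<Rightarrow> 'b::finite \<Rightarrow> real"
  assumes p: "distr p" and q: "distr q"
    and bound: "\<And>\<sigma> \<tau> k l. \<sigma> \<in> strat1 \<Longrightarrow> \<tau> \<in> strat2 \<Longrightarrow> \<bar>cond_payoff T M \<sigma> \<tau> k l\<bar> \<le> C"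
  shows "\<sigma> \<in> strat1 \<Longrightarrow> \<tau> \<in> strat2 \<Longrightarrow> \<bar>\<Sum>l\<in>UNIV. q l * cond_payoff T M \<sigma> \<tau> k l\<bar> \<le> C"
  by (rule abs_sum_distr_le[OF q bound])

lemma abs_sum_p_cond_payoff_le:
  fixes M :: "'k::finite \<Rightarrow> 'l::finite \<Rightarrow> 'a::finite \<Rightarrow> 'b::finite \<Rightarrow> real"
  assumes p: "distr p" and q: "distr q"
    and bound: "\<And>\<sigma> \<tau> k l. \<sigma> \<in> strat1 \<Longrightarrow> \<tau> \<in> strat2 \<Longrightarrow> \<bar>cond_payoff T M \<sigma> \<tau> k l\<bar> \<le> C"
  shows "\<sigma> \<in> strat1 \<Longrightarrow> \<tau> \<in> strat2 \<Longrightarrow> \<bar>\<Sum>k\<in>UNIV. p k * cond_payoff T M \<sigma> \<tau> k l\<bar> \<le> C"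
  by (rule abs_sum_distr_le[OF p bound])

lemma abs_gamma_le:
  fixes M :: "'k::finite \<Rightarrow> 'l::finite \<Rightarrow> 'a::finite \<Rightarrow> 'b::finite \<Rightarrow> real"
  assumes p: "distr p" and q: "distr q"
    and bound: "\<And>\<sigma> \<tau> k l. \<sigma> \<in> strat1 \<Longrightarrow> \<tau> \<in> strat2 \<Longrightarrow> \<bar>cond_payoff T M \<sigma> \<tau> k l\<bar> \<le> C"
  shows "\<sigma> \<in> strat1 \<Longrightarrow> \<tau> \<in> strat2 \<Longrightarrow> \<bar>gamma T M p q \<sigma> \<tau>\<bar> \<le> C"
  unfolding gamma_eq_sum_type1 by (rule abs_sum_distr_le[OF p abs_sum_q_cond_payoff_le[OF p q bound]])

lemma gamma_le_SUP:
  fixes M :: "'k::finite \<Rightarrow> 'l::finite \<Rightarrow> 'a::finite \<Rightarrow> 'b::finite \<Rightarrow> real"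
  assumes p: "distr p" and q: "distr q"
    and bound: "\<And>\<sigma> \<tau> k l. \<sigma> \<in> strat1 \<Longrightarrow> \<tau> \<in> strat2 \<Longrightarrow> \<bar>cond_payoff T M \<sigma> \<tau> k l\<bar> \<le> C"
  shows "\<sigma> \<in> strat1 \<Longrightarrow> \<tau> \<in> strat2 \<Longrightarrow> gamma T M p q \<sigma> \<tau> \<le> (SUP \<sigma>\<in>strat1. gamma T M p q \<sigma> \<tau>)"
  by (rule cSUP_upper[OF _ bdd_above_if_abs_le[OF abs_gamma_le[OF p q bound]]])

lemma INF_le_gamma:
  fixes M :: "'k::finite \<Rightarrow> 'l::finite \<Rightarrow> 'a::finite \<Rightarrow> 'b::finite \<Rightarrow> real"
  assumes p: "distr p" and q: "distr q"
    and bound: "\<And>\<sigma> \<tau> k l. \<sigma> \<in> strat1 \<Longrightarrow> \<tau> \<in> strat2 \<Longrightarrow> \<bar>cond_payoff T M \<sigma> \<tau> k l\<bar> \<le> C"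
  shows "\<sigma> \<in> strat1 \<Longrightarrow> \<tau> \<in> strat2 \<Longrightarrow> (INF \<tau>\<in>strat2. gamma T M p q \<sigma> \<tau>) \<le> gamma T M p q \<sigma> \<tau>"
  by (rule cINF_lower[OF bdd_below_if_abs_le[OF abs_gamma_le[OF p q bound]]])

lemma abs_w0_le:
  fixes M :: "'k::finite \<Rightarrow> 'l::finite \<Rightarrow> 'a::finite \<Rightarrow> 'b::finite \<Rightarrow> real"
  assumes p: "distr p" and q: "distr q"
    and bound: "\<And>\<sigma> \<tau> k l. \<sigma> \<in> strat1 \<Longrightarrow> \<tau> \<in> strat2 \<Longrightarrow> \<bar>cond_payoff T M \<sigma> \<tau> k l\<bar> \<le> C"
  shows "\<tau> \<in> strat2 \<Longrightarrow> \<bar>w0 T M q \<tau> k\<bar> \<le> C"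
  unfolding w0_def by (rule abs_SUP_le[OF strat1_nonempty abs_sum_q_cond_payoff_le[OF p q bound]])

lemma cond_payoff_le_w0:
  fixes M :: "'k::finite \<Rightarrow> 'l::finite \<Rightarrow> 'a::finite \<Rightarrow> 'b::finite \<Rightarrow> real"
  assumes p: "distr p" and q: "distr q"
    and bound: "\<And>\<sigma> \<tau> k l. \<sigma> \<in> strat1 \<Longrightarrow> \<tau> \<in> strat2 \<Longrightarrow> \<bar>cond_payoff T M \<sigma> \<tau> k l\<bar> \<le> C"
  shows "\<sigma> \<in> strat1 \<Longrightarrow> \<tau> \<in> strat2 \<Longrightarrow> (\<Sum>l\<in>UNIV. q l * cond_payoff T M \<sigma> \<tau> k l) \<le> w0 T M q \<tau> k"
  unfolding w0_def by (rule cSUP_upper[OF _ bdd_above_if_abs_le[OF abs_sum_q_cond_payoff_le[OF p q bound]]])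

lemma abs_u0_le:
  fixes M :: "'k::finite \<Rightarrow> 'l::finite \<Rightarrow> 'a::finite \<Rightarrow> 'b::finite \<Rightarrow> real"
  assumes p: "distr p" and q: "distr q"
    and bound: "\<And>\<sigma> \<tau> k l. \<sigma> \<in> strat1 \<Longrightarrow> \<tau> \<in> strat2 \<Longrightarrow> \<bar>cond_payoff T M \<sigma> \<tau> k l\<bar> \<le> C"
  shows "\<sigma> \<in> strat1 \<Longrightarrow> \<bar>u0 T M p \<sigma> l\<bar> \<le> C"
  unfolding u0_def by (rule abs_INF_le[OF strat2_nonempty abs_sum_p_cond_payoff_le[OF p q bound]])

lemma u0_le_cond_payoff:
  fixes M :: "'k::finite \<Rightarrow> 'l::finite \<Rightarrow> 'a::finite \<Rightarrow> 'b::finite \<Rightarrow> real"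
  assumes p: "distr p" and q: "distr q"
    and bound: "\<And>\<sigma> \<tau> k l. \<sigma> \<in> strat1 \<Longrightarrow> \<tau> \<in> strat2 \<Longrightarrow> \<bar>cond_payoff T M \<sigma> \<tau> k l\<bar> \<le> C"
  shows "\<sigma> \<in> strat1 \<Longrightarrow> \<tau> \<in> strat2 \<Longrightarrow> u0 T M p \<sigma> l \<le> (\<Sum>k\<in>UNIV. p k * cond_payoff T M \<sigma> \<tau> k l)"
  unfolding u0_def by (rule cINF_lower[OF bdd_below_if_abs_le[OF abs_sum_p_cond_payoff_le[OF p q bound]]])

lemma dual1_value_neg_w0_nonpos:
  fixes M :: "'k::finite \<Rightarrow> 'l::finite \<Rightarrow> 'a::finite \<Rightarrow> 'b::finite \<Rightarrow> real"
  assumes p: "distr p" and q: "distr q"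
    and bound: "\<And>\<sigma> \<tau> k l. \<sigma> \<in> strat1 \<Longrightarrow> \<tau> \<in> strat2 \<Longrightarrow> \<bar>cond_payoff T M \<sigma> \<tau> k l\<bar> \<le> C"
    and "\<tau> \<in> strat2"
  shows "dual1_value T M (\<lambda>k. - w0 T M q \<tau> k) q \<le> 0"
  unfolding dual1_value_def
proof (rule cSUP_least)
  show "{\<pi>. distr \<pi>} \<times> strat1 \<noteq> {}" using distr_nonempty strat1_nonempty by simp
next
  fix x :: "('k \<Rightarrow> real) \<times> ('k \<Rightarrow> 'a list \<Rightarrow> 'b list \<Rightarrow> 'a \<Rightarrow> real)"
  assume "x \<in> {\<pi>. distr \<pi>} \<times> strat1"
  then obtain \<pi> \<sigma> where x: "x = (\<pi>, \<sigma>)" and "distr \<pi>" "\<sigma> \<in> strat1" by auto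
  define G where "G \<tau>' = (\<Sum>k\<in>UNIV. \<pi> k * (- w0 T M q \<tau> k + (\<Sum>l\<in>UNIV. q l * cond_payoff T M \<sigma> \<tau>' k l)))"
    for \<tau>'
  have "\<bar>G \<tau>'\<bar> \<le> C + C" if "\<tau>' \<in> strat2" for \<tau>'
    unfolding G_def
  proof (rule abs_sum_distr_le[OF \<open>distr \<pi>\<close>])
    fix k
    show "\<bar>- w0 T M q \<tau> k + (\<Sum>l\<in>UNIV. q l * cond_payoff T M \<sigma> \<tau>' k l)\<bar> \<le> C + C"
      using abs_w0_le[OF p q bound assms(4), of k] abs_sum_q_cond_payoff_le[OF p q bound \<open>\<sigma> \<in> strat1\<close> that, of k] by linarith
  qed
  then have "(INF \<tau>'\<in>strat2. G \<tau>') \<le> G \<tau>"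
    by (rule cINF_lower[OF bdd_below_if_abs_le assms(4)])
  also have "G \<tau> \<le> 0"
    unfolding G_def using cond_payoff_le_w0[OF p q bound \<open>\<sigma> \<in> strat1\<close> assms(4)] \<open>distr \<pi>\<close>
    by (intro sum_nonpos mult_nonneg_nonpos) (simp_all add: distrD)
  finally show "(case x of (\<pi>, \<sigma>) \<Rightarrow> INF \<tau>'\<in>strat2.
      \<Sum>k\<in>UNIV. \<pi> k * (- w0 T M q \<tau> k + (\<Sum>l\<in>UNIV. q l * cond_payoff T M \<sigma> \<tau>' k l))) \<le> 0"
    unfolding x G_def by simp
qed

lemma sum_w0_le_SUP_gamma:
  fixes M :: "'k::finite \<Rightarrow> 'l::finite \<Rightarrow> 'a::finite \<Rightarrow> 'b::finite \<Rightarrow> real"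
  assumes p: "distr p" and q: "distr q"
    and bound: "\<And>\<sigma> \<tau> k l. \<sigma> \<in> strat1 \<Longrightarrow> \<tau> \<in> strat2 \<Longrightarrow> \<bar>cond_payoff T M \<sigma> \<tau> k l\<bar> \<le> C"
    and "\<tau> \<in> strat2"
  shows "(\<Sum>k\<in>UNIV. p k * w0 T M q \<tau> k) \<le> (SUP \<sigma>\<in>strat1. gamma T M p q \<sigma> \<tau>)"
proof (rule field_le_epsilon)
  fix e :: real
  assume "0 < e"
  define h where "h k \<sigma> = (\<Sum>l\<in>UNIV. q l * cond_payoff T M \<sigma> \<tau> k l)" for k \<sigma>
  have "\<exists>\<sigma>\<in>strat1. w0 T M q \<tau> k - e < h k \<sigma>" for k
  proof -
    have "w0 T M q \<tau> k - e < (SUP \<sigma>\<in>strat1. h k \<sigma>)" using \<open>0 < e\<close> unfolding w0_def h_def by simp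
    moreover have "bdd_above (h k ` strat1)"
      unfolding h_def by (rule bdd_above_if_abs_le[OF abs_sum_q_cond_payoff_le[OF p q bound _ assms(4)]])
    ultimately show ?thesis using less_cSUP_iff[OF strat1_nonempty] by blast
  qed
  then obtain best where best: "\<And>k. best k \<in> strat1" "\<And>k. w0 T M q \<tau> k - e < h k (best k)"
    by metis
  \<comment> \<open>each type k plays its own nearly optimal reply to \<tau>\<close>
  define \<sigma> where "\<sigma> k = best k k" for k
  have "\<sigma> \<in> strat1" using best(1) by (simp add: \<sigma>_def strat1_def)
  have "h k \<sigma> = h k (best k)" for k
    unfolding h_def cond_payoff_def by (simp add: payoff_from_cong_type1[of \<sigma> k "best k"] \<sigma>_def)
  then have "(\<Sum>k\<in>UNIV. p k * (w0 T M q \<tau> k - e)) \<le> (\<Sum>k\<in>UNIV. p k * h k \<sigma>)"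
    using best(2) by (intro sum_distr_le[OF p]) (simp add: less_imp_le)
  also have "\<dots> = gamma T M p q \<sigma> \<tau>" unfolding gamma_eq_sum_type1 h_def ..
  also have "\<dots> \<le> (SUP \<sigma>\<in>strat1. gamma T M p q \<sigma> \<tau>)" by (rule gamma_le_SUP[OF p q bound \<open>\<sigma> \<in> strat1\<close> assms(4)])
  finally show "(\<Sum>k\<in>UNIV. p k * w0 T M q \<tau> k) \<le> (SUP \<sigma>\<in>strat1. gamma T M p q \<sigma> \<tau>) + e"
    using p by (simp add: right_diff_distrib sum_subtractf sum_distr_const)
qed

lemma INF_gamma_le_dual1_value:
  fixes M :: "'k::finite \<Rightarrow> 'l::finite \<Rightarrow> 'a::finite \<Rightarrow> 'b::finite \<Rightarrow> real"
  assumes p: "distr p" and q: "distr q"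
    and bound: "\<And>\<sigma> \<tau> k l. \<sigma> \<in> strat1 \<Longrightarrow> \<tau> \<in> strat2 \<Longrightarrow> \<bar>cond_payoff T M \<sigma> \<tau> k l\<bar> \<le> C"
    and "\<sigma> \<in> strat1"
  shows "(INF \<tau>\<in>strat2. gamma T M p q \<sigma> \<tau>) + (\<Sum>k\<in>UNIV. p k * \<mu> k) \<le> dual1_value T M \<mu> q"
proof -
  define G where "G \<pi> \<sigma> \<tau> = (\<Sum>k\<in>UNIV. \<pi> k * (\<mu> k + (\<Sum>l\<in>UNIV. q l * cond_payoff T M \<sigma> \<tau> k l)))"
    for \<pi> \<sigma> \<tau>
  define R where "R = (\<Sum>k\<in>UNIV. \<bar>\<mu> k\<bar>) + C"
  have "\<bar>G \<pi> \<sigma>' \<tau>\<bar> \<le> R" if "distr \<pi>" "\<sigma>' \<in> strat1" "\<tau> \<in> strat2" for \<pi> \<sigma>' \<tau>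
    unfolding G_def
  proof (rule abs_sum_distr_le[OF that(1)])
    fix k
    have "\<bar>\<mu> k\<bar> \<le> (\<Sum>k\<in>UNIV. \<bar>\<mu> k\<bar>)" by (rule member_le_sum) simp_all
    then show "\<bar>\<mu> k + (\<Sum>l\<in>UNIV. q l * cond_payoff T M \<sigma>' \<tau> k l)\<bar> \<le> R"
      using abs_sum_q_cond_payoff_le[OF p q bound that(2,3), of k] unfolding R_def by linarith
  qed
  then have bdd: "bdd_above ((\<lambda>(\<pi>, \<sigma>'). INF \<tau>\<in>strat2. G \<pi> \<sigma>' \<tau>) ` ({\<pi>. distr \<pi>} \<times> strat1))"
    by (intro bdd_above_if_abs_le[of _ _ R]) (auto intro: abs_INF_le[OF strat2_nonempty])
  have "(INF \<tau>\<in>strat2. gamma T M p q \<sigma> \<tau>) + (\<Sum>k\<in>UNIV. p k * \<mu> k) \<le> (INF \<tau>\<in>strat2. G p \<sigma> \<tau>)"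
  proof (rule cINF_greatest[OF strat2_nonempty])
    fix \<tau> :: "'l \<Rightarrow> 'a list \<Rightarrow> 'b list \<Rightarrow> 'b \<Rightarrow> real"
    assume "\<tau> \<in> strat2"
    have "G p \<sigma> \<tau> = (\<Sum>k\<in>UNIV. p k * \<mu> k) + gamma T M p q \<sigma> \<tau>"
      unfolding G_def gamma_eq_sum_type1 by (simp add: distrib_left sum.distrib)
    then show "(INF \<tau>\<in>strat2. gamma T M p q \<sigma> \<tau>) + (\<Sum>k\<in>UNIV. p k * \<mu> k) \<le> G p \<sigma> \<tau>"
      using INF_le_gamma[OF p q bound assms(4) \<open>\<tau> \<in> strat2\<close>] by simp
  qed
  also have "\<dots> \<le> dual1_value T M \<mu> q"
    unfolding dual1_value_def G_def[symmetric]
    using cSUP_upper[OF _ bdd, of "(p, \<sigma>)"] p assms(4) by simp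
  finally show ?thesis .
qed

lemma dual2_value_le_SUP_gamma:
  fixes M :: "'k::finite \<Rightarrow> 'l::finite \<Rightarrow> 'a::finite \<Rightarrow> 'b::finite \<Rightarrow> real"
  assumes p: "distr p" and q: "distr q"
    and bound: "\<And>\<sigma> \<tau> k l. \<sigma> \<in> strat1 \<Longrightarrow> \<tau> \<in> strat2 \<Longrightarrow> \<bar>cond_payoff T M \<sigma> \<tau> k l\<bar> \<le> C"
    and "\<tau> \<in> strat2"
  shows "dual2_value T M p \<nu> \<le> (\<Sum>l\<in>UNIV. q l * \<nu> l) + (SUP \<sigma>\<in>strat1. gamma T M p q \<sigma> \<tau>)"
  unfolding dual2_value_def
proof (rule cSUP_least[OF strat1_nonempty])
  fix \<sigma> :: "'k \<Rightarrow> 'a list \<Rightarrow> 'b list \<Rightarrow> 'a \<Rightarrow> real"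
  assume "\<sigma> \<in> strat1"
  define G where "G \<rho> \<tau> = (\<Sum>l\<in>UNIV. \<rho> l * (\<nu> l + (\<Sum>k\<in>UNIV. p k * cond_payoff T M \<sigma> \<tau> k l)))" for \<rho> \<tau>
  have "\<bar>G \<rho> \<tau>'\<bar> \<le> (\<Sum>l\<in>UNIV. \<bar>\<nu> l\<bar>) + C" if "distr \<rho>" "\<tau>' \<in> strat2" for \<rho> \<tau>'
    unfolding G_def
  proof (rule abs_sum_distr_le[OF that(1)])
    fix l
    have "\<bar>\<nu> l\<bar> \<le> (\<Sum>l\<in>UNIV. \<bar>\<nu> l\<bar>)" by (rule member_le_sum) simp_all
    then show "\<bar>\<nu> l + (\<Sum>k\<in>UNIV. p k * cond_payoff T M \<sigma> \<tau>' k l)\<bar> \<le> (\<Sum>l\<in>UNIV. \<bar>\<nu> l\<bar>) + C"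
      using abs_sum_p_cond_payoff_le[OF p q bound \<open>\<sigma> \<in> strat1\<close> that(2), of l] by linarith
  qed
  then have "bdd_below ((\<lambda>(\<rho>, \<tau>'). G \<rho> \<tau>') ` ({\<rho>. distr \<rho>} \<times> strat2))"
    by (intro bdd_below_if_abs_le[of _ _ "(\<Sum>l\<in>UNIV. \<bar>\<nu> l\<bar>) + C"]) auto
  then have "(INF (\<rho>, \<tau>')\<in>{\<rho>. distr \<rho>} \<times> strat2. G \<rho> \<tau>') \<le> (case (q, \<tau>) of (\<rho>, \<tau>') \<Rightarrow> G \<rho> \<tau>')"
    by (rule cINF_lower) (simp add: q assms(4))
  also have "\<dots> = (\<Sum>l\<in>UNIV. q l * \<nu> l) + gamma T M p q \<sigma> \<tau>"
    unfolding G_def gamma_eq_sum_type2 by (simp add: distrib_left sum.distrib)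
  also have "\<dots> \<le> (\<Sum>l\<in>UNIV. q l * \<nu> l) + (SUP \<sigma>\<in>strat1. gamma T M p q \<sigma> \<tau>)"
    using gamma_le_SUP[OF p q bound \<open>\<sigma> \<in> strat1\<close> assms(4)] by simp
  finally show "(INF (\<rho>, \<tau>')\<in>{\<rho>. distr \<rho>} \<times> strat2.
      \<Sum>l\<in>UNIV. \<rho> l * (\<nu> l + (\<Sum>k\<in>UNIV. p k * cond_payoff T M \<sigma> \<tau>' k l)))
      \<le> (\<Sum>l\<in>UNIV. q l * \<nu> l) + (SUP \<sigma>\<in>strat1. gamma T M p q \<sigma> \<tau>)"
    unfolding G_def .
qed

lemma dual2_value_neg_u0_nonneg:
  fixes M :: "'k::finite \<Rightarrow> 'l::finite \<Rightarrow> 'a::finite \<Rightarrow> 'b::finite \<Rightarrow> real"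
  assumes p: "distr p" and q: "distr q"
    and bound: "\<And>\<sigma> \<tau> k l. \<sigma> \<in> strat1 \<Longrightarrow> \<tau> \<in> strat2 \<Longrightarrow> \<bar>cond_payoff T M \<sigma> \<tau> k l\<bar> \<le> C"
    and "\<sigma> \<in> strat1"
  shows "0 \<le> dual2_value T M p (\<lambda>l. - u0 T M p \<sigma> l)"
proof -
  define G where "G \<sigma>' \<rho> \<tau> = (\<Sum>l\<in>UNIV. \<rho> l * (- u0 T M p \<sigma> l + (\<Sum>k\<in>UNIV. p k * cond_payoff T M \<sigma>' \<tau> k l)))"
    for \<sigma>' \<rho> \<tau>
  have Gbound: "\<bar>G \<sigma>' \<rho> \<tau>\<bar> \<le> C + C" if "\<sigma>' \<in> strat1" "distr \<rho>" "\<tau> \<in> strat2" for \<sigma>' \<rho> \<tau>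
    unfolding G_def
  proof (rule abs_sum_distr_le[OF that(2)])
    fix l
    show "\<bar>- u0 T M p \<sigma> l + (\<Sum>k\<in>UNIV. p k * cond_payoff T M \<sigma>' \<tau> k l)\<bar> \<le> C + C"
      using abs_u0_le[OF p q bound assms(4), of l] abs_sum_p_cond_payoff_le[OF p q bound that(1,3), of l] by linarith
  qed
  have nonempty: "{\<rho>. distr \<rho>} \<times> strat2 \<noteq> {}" using distr_nonempty strat2_nonempty by simp
  have "0 \<le> (INF (\<rho>, \<tau>)\<in>{\<rho>. distr \<rho>} \<times> strat2. G \<sigma> \<rho> \<tau>)"
  proof (rule cINF_greatest[OF nonempty])
    fix x :: "('l \<Rightarrow> real) \<times> ('l \<Rightarrow> 'a list \<Rightarrow> 'b list \<Rightarrow> 'b \<Rightarrow> real)"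
    assume "x \<in> {\<rho>. distr \<rho>} \<times> strat2"
    then obtain \<rho> \<tau> where x: "x = (\<rho>, \<tau>)" and "distr \<rho>" "\<tau> \<in> strat2" by auto
    have "0 \<le> G \<sigma> \<rho> \<tau>"
      unfolding G_def using u0_le_cond_payoff[OF p q bound assms(4) \<open>\<tau> \<in> strat2\<close>] \<open>distr \<rho>\<close>
      by (intro sum_nonneg mult_nonneg_nonneg) (simp_all add: distrD)
    then show "0 \<le> (case x of (\<rho>, \<tau>) \<Rightarrow> G \<sigma> \<rho> \<tau>)" unfolding x by simp
  qed
  also have "\<dots> \<le> (SUP \<sigma>'\<in>strat1. INF (\<rho>, \<tau>)\<in>{\<rho>. distr \<rho>} \<times> strat2. G \<sigma>' \<rho> \<tau>)"
  proof (rule cSUP_upper[OF assms(4) bdd_above_if_abs_le])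
    fix \<sigma>' :: "'k \<Rightarrow> 'a list \<Rightarrow> 'b list \<Rightarrow> 'a \<Rightarrow> real"
    assume "\<sigma>' \<in> strat1"
    then show "\<bar>INF (\<rho>, \<tau>)\<in>{\<rho>. distr \<rho>} \<times> strat2. G \<sigma>' \<rho> \<tau>\<bar> \<le> C + C"
      using Gbound by (intro abs_INF_le[OF nonempty]) auto
  qed
  also have "\<dots> = dual2_value T M p (\<lambda>l. - u0 T M p \<sigma> l)"
    unfolding dual2_value_def G_def ..
  finally show ?thesis .
qed

lemma INF_gamma_le_sum_u0:
  fixes M :: "'k::finite \<Rightarrow> 'l::finite \<Rightarrow> 'a::finite \<Rightarrow> 'b::finite \<Rightarrow> real"
  assumes p: "distr p" and q: "distr q"
    and bound: "\<And>\<sigma> \<tau> k l. \<sigma> \<in> strat1 \<Longrightarrow> \<tau> \<in> strat2 \<Longrightarrow> \<bar>cond_payoff T M \<sigma> \<tau> k l\<bar> \<le> C"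
    and "\<sigma> \<in> strat1"
  shows "(INF \<tau>\<in>strat2. gamma T M p q \<sigma> \<tau>) \<le> (\<Sum>l\<in>UNIV. q l * u0 T M p \<sigma> l)"
proof (rule field_le_epsilon)
  fix e :: real
  assume "0 < e"
  define g where "g l \<tau> = (\<Sum>k\<in>UNIV. p k * cond_payoff T M \<sigma> \<tau> k l)" for l \<tau>
  have "\<exists>\<tau>\<in>strat2. g l \<tau> < u0 T M p \<sigma> l + e" for l
  proof -
    have "(INF \<tau>\<in>strat2. g l \<tau>) < u0 T M p \<sigma> l + e" using \<open>0 < e\<close> unfolding u0_def g_def by simp
    moreover have "bdd_below (g l ` strat2)"
      unfolding g_def by (rule bdd_below_if_abs_le[OF abs_sum_p_cond_payoff_le[OF p q bound assms(4)]])
    ultimately show ?thesis using cINF_less_iff[OF strat2_nonempty] by blast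
  qed
  then obtain best where best: "\<And>l. best l \<in> strat2" "\<And>l. g l (best l) < u0 T M p \<sigma> l + e"
    by metis
  \<comment> \<open>each type l plays its own nearly optimal reply to \<sigma>\<close>
  define \<tau> where "\<tau> l = best l l" for l
  have "\<tau> \<in> strat2" using best(1) by (simp add: \<tau>_def strat2_def)
  have "g l \<tau> = g l (best l)" for l
    unfolding g_def cond_payoff_def by (simp add: payoff_from_cong_type2[of \<tau> l "best l"] \<tau>_def)
  have "(INF \<tau>\<in>strat2. gamma T M p q \<sigma> \<tau>) \<le> gamma T M p q \<sigma> \<tau>"
    by (rule INF_le_gamma[OF p q bound assms(4) \<open>\<tau> \<in> strat2\<close>])
  also have "\<dots> = (\<Sum>l\<in>UNIV. q l * g l \<tau>)" unfolding gamma_eq_sum_type2 g_def ..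
  also have "\<dots> \<le> (\<Sum>l\<in>UNIV. q l * (u0 T M p \<sigma> l + e))"
    using best(2) \<open>\<And>l. g l \<tau> = g l (best l)\<close> by (intro sum_distr_le[OF q]) (simp add: less_imp_le)
  finally show "(INF \<tau>\<in>strat2. gamma T M p q \<sigma> \<tau>) \<le> (\<Sum>l\<in>UNIV. q l * u0 T M p \<sigma> l) + e"
    using q by (simp add: distrib_left sum.distrib sum_distr_const)
qed

theorem lemma2:
  fixes M :: "'k::finite \<Rightarrow> 'l::finite \<Rightarrow> 'a::finite \<Rightarrow> 'b::finite \<Rightarrow> real"
    and p :: "'k \<Rightarrow> real" and q :: "'l \<Rightarrow> real" and T :: nat
    and \<sigma>s :: "'k \<Rightarrow> 'a list \<Rightarrow> 'b list \<Rightarrow> 'a \<Rightarrow> real"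
    and \<tau>s :: "'l \<Rightarrow> 'a list \<Rightarrow> 'b list \<Rightarrow> 'b \<Rightarrow> real"
  assumes "distr p" and "\<forall>k. 0 < p k"
    and "distr q" and "\<forall>l. 0 < q l"
    and "security1 T M p q \<sigma>s"
    and "security2 T M p q \<tau>s"
  shows "(\<forall>\<mu>. dual1_value T M (\<lambda>k. - w0 T M q \<tau>s k) q - (\<Sum>k\<in>UNIV. p k * (- w0 T M q \<tau>s k))
              \<le> dual1_value T M \<mu> q - (\<Sum>k\<in>UNIV. p k * \<mu> k))
       \<and> (\<forall>\<nu>. dual2_value T M p \<nu> - (\<Sum>l\<in>UNIV. q l * \<nu> l)
              \<le> dual2_value T M p (\<lambda>l. - u0 T M p \<sigma>s l) - (\<Sum>l\<in>UNIV. q l * (- u0 T M p \<sigma>s l)))"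
proof -
  obtain C where C: "\<forall>\<sigma>\<in>strat1. \<forall>\<tau>\<in>strat2. \<forall>k l. \<bar>cond_payoff T M \<sigma> \<tau> k l\<bar> \<le> C"
    using cond_payoff_bounded by blast
  note bounded = assms(1,3) C[rule_format]
  have "\<sigma>s \<in> strat1" "\<tau>s \<in> strat2"
    using assms(5,6) unfolding security1_def security2_def by blast+
  have saddle: "(SUP \<sigma>\<in>strat1. gamma T M p q \<sigma> \<tau>s) \<le> (INF \<tau>\<in>strat2. gamma T M p q \<sigma>s \<tau>)"
    using sup_gamma_le_inf_gamma[OF assms(5,6)] .
  show ?thesis
  proof (intro conjI allI)
    fix \<mu>
    show "dual1_value T M (\<lambda>k. - w0 T M q \<tau>s k) q - (\<Sum>k\<in>UNIV. p k * (- w0 T M q \<tau>s k))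
        \<le> dual1_value T M \<mu> q - (\<Sum>k\<in>UNIV. p k * \<mu> k)"
      using dual1_value_neg_w0_nonpos[OF bounded \<open>\<tau>s \<in> strat2\<close>]
        sum_w0_le_SUP_gamma[OF bounded \<open>\<tau>s \<in> strat2\<close>] saddle
        INF_gamma_le_dual1_value[OF bounded \<open>\<sigma>s \<in> strat1\<close>, of \<mu>]
      by (simp add: sum_negf)
  next
    fix \<nu>
    show "dual2_value T M p \<nu> - (\<Sum>l\<in>UNIV. q l * \<nu> l)
        \<le> dual2_value T M p (\<lambda>l. - u0 T M p \<sigma>s l) - (\<Sum>l\<in>UNIV. q l * (- u0 T M p \<sigma>s l))"
      using dual2_value_le_SUP_gamma[OF bounded \<open>\<tau>s \<in> strat2\<close>, of \<nu>] saddle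
        INF_gamma_le_sum_u0[OF bounded \<open>\<sigma>s \<in> strat1\<close>]
        dual2_value_neg_u0_nonneg[OF bounded \<open>\<sigma>s \<in> strat1\<close>]
      by (simp add: sum_negf)
  qed
qed

end
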